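(* Let $\rho>0$, $v\in[0,1]$ and $(l,m,n)\in\mathbb{Z}_+^3$ with $n+\min\{l,m\}\ge1$. Then $\mathbb{E}_{l,m,n,0}[v^{s(\tau)}]=\mathbb{E}_{l,m,n,0}\Bigl[\exp\Bigl\{-\frac{\rho(1-v)}{2}\int_0^{\tau_v}c_v(u)\,du\Bigr\}\Bigr]$, where $\tau=\inf\{s\ge0:(a(s),b(s),c(s))\in\mathcal S\}$, $\tau_v=\inf\{s\ge0:(a_v(s),b_v(s),c_v(s))\in\mathcal S\}$ and $\mathcal S=\{(0,0,1),(1,1,0)\}$.
   Context: The ancestral chain $(a(t),b(t),c(t))$ with parameter $\rho$ is the continuous-time Markov chain on $\mathbb{Z}_+^3\setminus\{\mathbf 0\}$ which from $(a,b,c)$ jumps to $(a+1,b+1,c-1)$ at rate $c\rho/2$ (a recombination event), to $(a-1,b-1,c+1)$ at rate $ab$, to $(a-1,b,c)$ at rate $ac+a(a-1)/2$, to $(a,b-1,c)$ at rate $bc+b(b-1)/2$, and to $(a,b,c-1)$ at rate $c(c-1)/2$. $s(t)$ is the number of recombination jumps in $(0,t)$; $\mathbb{E}_{l,m,n,0}$ denotes expectation with initial state $(l,m,n)$ and $s(0)=0$. $(a_v,b_v,c_v)$ denotes the same chain with $\rho$ replaced by $v\rho$, started at $(l,m,n)$. *)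

theory Defs
  imports "HOL-Probability.Probability"
begin

text \<open>
  The ancestral chain is realised pathwise, in the standard way, from an i.i.d. sequence
  of pairs (E_k, U_k) with E_k ~ Exp(1) and U_k ~ Uniform[0,1] (independent):
  the jump chain moves from state x to target y with probability rate(x,y)/q(x),
  using U_k; the holding time in the k-th state is E_k / q(x) (Exp(q(x))).
  A state with total rate q(x) = 0 is absorbing (the chain stays there forever).
\<close>

type_synonym state = "nat \<times> nat \<times> nat"

fun anc_rates :: "real \<Rightarrow> state \<Rightarrow> (real \<times> state) list" where
  "anc_rates \<rho> (a, b, c) =
     [ (real c * \<rho> / 2, (a + 1, b + 1, c - 1)),
       (real a * real b, (a - 1, b - 1, c + 1)),
       (real a * real c + real a * (real a - 1) / 2, (a - 1, b, c)),
       (real b * real c + real b * (real b - 1) / 2, (a, b - 1, c)),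
       (real c * (real c - 1) / 2, (a, b, c - 1)) ]"

definition total_rate :: "real \<Rightarrow> state \<Rightarrow> real" where
  "total_rate \<rho> x = sum_list (map fst (anc_rates \<rho> x))"

fun pick :: "(real \<times> state) list \<Rightarrow> state \<Rightarrow> real \<Rightarrow> state" where
  "pick [] d u = d"
| "pick ((r, y) # xs) d u = (if u < r then y else pick xs d (u - r))"

definition next_state :: "real \<Rightarrow> state \<Rightarrow> real \<Rightarrow> state" where
  "next_state \<rho> x u =
     (if total_rate \<rho> x = 0 then x else pick (anc_rates \<rho> x) x (u * total_rate \<rho> x))"

fun jump_chain :: "real \<Rightarrow> state \<Rightarrow> (real \<times> real) stream \<Rightarrow> nat \<Rightarrow> state" where
  "jump_chain \<rho> x0 \<omega> 0 = x0"
| "jump_chain \<rho> x0 \<omega> (Suc k) = next_state \<rho> (jump_chain \<rho> x0 \<omega> k) (snd (\<omega> !! k))"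

definition holding_time :: "real \<Rightarrow> state \<Rightarrow> (real \<times> real) stream \<Rightarrow> nat \<Rightarrow> real" where
  "holding_time \<rho> x0 \<omega> k =
     (let q = total_rate \<rho> (jump_chain \<rho> x0 \<omega> k) in if q = 0 then 1 else fst (\<omega> !! k) / q)"

definition jump_time :: "real \<Rightarrow> state \<Rightarrow> (real \<times> real) stream \<Rightarrow> nat \<Rightarrow> real" where
  "jump_time \<rho> x0 \<omega> k = (\<Sum>i<k. holding_time \<rho> x0 \<omega> i)"

definition anc_proc :: "real \<Rightarrow> state \<Rightarrow> (real \<times> real) stream \<Rightarrow> real \<Rightarrow> state" where
  "anc_proc \<rho> x0 \<omega> t = jump_chain \<rho> x0 \<omega> (card {k. jump_time \<rho> x0 \<omega> (Suc k) \<le> t})"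

fun is_recomb :: "state \<Rightarrow> state \<Rightarrow> bool" where
  "is_recomb (a, b, c) y = (0 < c \<and> y = (a + 1, b + 1, c - 1))"

definition recomb_count :: "real \<Rightarrow> state \<Rightarrow> (real \<times> real) stream \<Rightarrow> real \<Rightarrow> nat" where
  "recomb_count \<rho> x0 \<omega> t =
     card {k. jump_time \<rho> x0 \<omega> (Suc k) < t \<and>
              is_recomb (jump_chain \<rho> x0 \<omega> k) (jump_chain \<rho> x0 \<omega> (Suc k))}"

definition S_set :: "state set" where
  "S_set = {(0, 0, 1), (1, 1, 0)}"

definition hit_time :: "real \<Rightarrow> state \<Rightarrow> (real \<times> real) stream \<Rightarrow> real" where
  "hit_time \<rho> x0 \<omega> = Inf {t. 0 \<le> t \<and> anc_proc \<rho> x0 \<omega> t \<in> S_set}"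

definition noise :: "(real \<times> real) measure" where
  "noise = density lborel (exponential_density 1) \<Otimes>\<^sub>M uniform_measure lborel {0..1}"

definition path_space :: "(real \<times> real) stream measure" where
  "path_space = stream_space noise"

end

theory Submission
  imports Defs
begin

text \<open>Both sides are limits of truncations after k jumps of the embedded jump chain, stopped
  on S. On the left the truncation multiplies a factor v for each recombination jump of the
  \<rho>-chain; on the right it multiplies, for each holding time h in a state (a, b, c), the
  factor exp (- \<alpha> c h) with \<alpha> = \<rho> (1 - v) / 2, along the (v \<rho>)-chain.
  Conditioning on the first jump, both expectations obey the same recursion: the Laplace
  transform of the exponential holding time contributes q' / (q' + \<alpha> c), where q' is the
  total rate of the (v \<rho>)-chain and q' + \<alpha> c that of the \<rho>-chain, whose recombination rate
  thinned by v is the recombination rate of the (v \<rho>)-chain. So the truncated expectations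
  agree for every k. Both chains stay in a finite box in which every state outside S has a jump
  of rate at least 1 removing a lineage; hence S is hit almost surely after finitely many
  jumps, the truncations are eventually constant, and dominated convergence concludes.\<close>

section \<open>Measurability of the path functionals\<close>

lemma sets_noise[measurable_cong]: "sets noise = sets (borel \<Otimes>\<^sub>M borel)"
  unfolding noise_def by (intro sets_pair_measure_cong) auto

lemma measurable_pick[measurable]: "pick L d \<in> borel \<rightarrow>\<^sub>M count_space UNIV"
proof (induction L)
  case Nil then show ?case by simp
next
  case (Cons a L)
  obtain r y where a: "a = (r, y)" by (cases a)
  have "(\<lambda>s. pick L d (s - r)) \<in> borel \<rightarrow>\<^sub>M count_space UNIV"
    using Cons by measurable
  then show ?case unfolding a by simp
qed

lemma measurable_next_state[measurable]: "next_state \<rho> x \<in> borel \<rightarrow>\<^sub>M count_space UNIV"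
  unfolding next_state_def by measurable

lemma measurable_jump_chain[measurable]:
  "(\<lambda>\<omega>. jump_chain \<rho> x0 \<omega> k) \<in> path_space \<rightarrow>\<^sub>M count_space UNIV"
proof (induction k)
  case 0 then show ?case by simp
next
  case (Suc k)
  have "(\<lambda>\<omega>. next_state \<rho> (jump_chain \<rho> x0 \<omega> k) (snd (\<omega> !! k))) \<in> path_space \<rightarrow>\<^sub>M count_space UNIV"
    by (rule measurable_compose_countable'[OF _ Suc]) (auto simp: path_space_def)
  then show ?case by simp
qed

lemma measurable_holding_time[measurable]:
  "(\<lambda>\<omega>. holding_time \<rho> x0 \<omega> k) \<in> borel_measurable path_space"
proof -
  have "(\<lambda>\<omega>. (\<lambda>y \<omega>. let q = total_rate \<rho> y in if q = 0 then 1 else fst (\<omega> !! k) / q) (jump_chain \<rho> x0 \<omega> k) \<omega>) \<in> borel_measurable path_space"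
    by (rule measurable_compose_countable'[OF _ measurable_jump_chain]) (auto simp: path_space_def Let_def)
  then show ?thesis by (simp add: holding_time_def)
qed

lemma measurable_jump_time[measurable]:
  "(\<lambda>\<omega>. jump_time \<rho> x0 \<omega> k) \<in> borel_measurable path_space"
  unfolding jump_time_def by measurable

definition hitting_times :: "(nat \<Rightarrow> 'a \<Rightarrow> real) \<Rightarrow> (nat \<Rightarrow> 'a \<Rightarrow> state) \<Rightarrow> 'a \<Rightarrow> real set" where
  "hitting_times J C x = {t. 0 \<le> t \<and> C (card {k. J k x \<le> t}) x \<in> S_set}"

text \<open>Every time in the hitting set is matched by a countable witness: a jump time, the time 0,
  or, when infinitely many jumps precede it, a rational time. In the last case the jump
  counter is an infinite set, whose card is 0, so the process reads as C 0.\<close>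

lemma ex_rat_infinite_jumps_le:
  assumes "0 \<le> t" and "t < b" and "infinite {k. J k x \<le> t}"
  shows "\<exists>q::rat. 0 \<le> real_of_rat q \<and> real_of_rat q < b \<and> infinite {j. J j x \<le> real_of_rat q}"
proof -
  obtain q where q: "q \<in> \<rat>" "t < q" "q < b" using Rats_dense_in_real[OF assms(2)] by auto
  then obtain r where r: "q = real_of_rat r" by (auto simp: Rats_def)
  have "{k. J k x \<le> t} \<subseteq> {j. J j x \<le> real_of_rat r}" using q r by auto
  then have "infinite {j. J j x \<le> real_of_rat r}" using assms(3) finite_subset by blast
  moreover have "0 \<le> real_of_rat r" using q r assms(1) by linarith
  ultimately show ?thesis using q r by (intro exI[of _ r]) auto
qed

lemma hitting_time_finite_jumps_le:
  assumes t: "t \<in> hitting_times J C x" "t < b" and fin: "finite {k. J k x \<le> t}"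
  shows "(\<exists>k. 0 \<le> J k x \<and> J k x < b \<and> C (card {j. J j x \<le> J k x}) x \<in> S_set)
       \<or> (0 < b \<and> C (card {j. J j x \<le> 0}) x \<in> S_set)"
proof -
  define K where "K = {k. J k x \<le> t}"
  have t0: "0 \<le> t" and CK: "C (card K) x \<in> S_set" using t by (auto simp: hitting_times_def K_def)
  show ?thesis
  proof (cases "\<exists>k\<in>K. 0 \<le> J k x")
    case False
    then have "{j. J j x \<le> 0} = K" using t0 by (fastforce simp: K_def intro: order_trans)
    then show ?thesis using t0 t(2) CK by auto
  next
    case True
    define s where "s = Max ((\<lambda>k. J k x) ` K)"
    have sK: "s \<in> (\<lambda>k. J k x) ` K" unfolding s_def using fin True by (intro Max_in) (auto simp: K_def)
    have sge: "J k x \<le> s" if "k \<in> K" for k unfolding s_def using fin that by (intro Max_ge) (auto simp: K_def)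
    have "s \<le> t" using sK by (auto simp: K_def)
    moreover obtain k0 where "k0 \<in> K" "0 \<le> J k0 x" using True by blast
    then have "0 \<le> s" using sge by (meson order_trans)
    moreover have "{j. J j x \<le> s} = K" using sge \<open>s \<le> t\<close> by (auto simp: K_def)
    ultimately show ?thesis using sK CK t(2) by (auto simp: K_def)
  qed
qed

lemma ex_hitting_time_less_iff:
  "(\<exists>t\<in>hitting_times J C x. t < b) \<longleftrightarrow>
     (\<exists>k. 0 \<le> J k x \<and> J k x < b \<and> C (card {j. J j x \<le> J k x}) x \<in> S_set)
   \<or> (0 < b \<and> C (card {j. J j x \<le> 0}) x \<in> S_set)
   \<or> (C 0 x \<in> S_set \<and> (\<exists>q::rat. 0 \<le> real_of_rat q \<and> real_of_rat q < b \<and> infinite {j. J j x \<le> real_of_rat q}))"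
  (is "?L \<longleftrightarrow> ?A \<or> ?B \<or> ?C")
proof
  assume ?L
  then obtain t where t: "t \<in> hitting_times J C x" "t < b" by blast
  show "?A \<or> ?B \<or> ?C"
  proof (cases "finite {k. J k x \<le> t}")
    case True
    then show ?thesis using hitting_time_finite_jumps_le[OF t] by blast
  next
    case False
    have "0 \<le> t" "C 0 x \<in> S_set" using t False by (auto simp: hitting_times_def)
    with ex_rat_infinite_jumps_le[of t b J x] show ?thesis using t(2) False by simp
  qed
next
  assume "?A \<or> ?B \<or> ?C"
  then show ?L
  proof (elim disjE exE conjE)
    fix k assume "0 \<le> J k x" "J k x < b" "C (card {j. J j x \<le> J k x}) x \<in> S_set"
    then show ?L by (auto simp: hitting_times_def)
  next
    assume "0 < b" "C (card {j. J j x \<le> 0}) x \<in> S_set"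
    then show ?L by (auto simp: hitting_times_def intro!: bexI[of _ 0])
  next
    fix q assume "C 0 x \<in> S_set" "0 \<le> real_of_rat q" "real_of_rat q < b" "infinite {j. J j x \<le> real_of_rat q}"
    then show ?L unfolding hitting_times_def by (intro bexI[of _ "real_of_rat q"]) auto
  qed
qed

lemma pred_ex_hitting_time_less:
  assumes [measurable]: "\<And>k. J k \<in> borel_measurable M" "\<And>k. C k \<in> M \<rightarrow>\<^sub>M count_space UNIV"
  shows "Measurable.pred M (\<lambda>x. \<exists>t\<in>hitting_times J C x. t < b)"
proof -
  have c1: "(\<lambda>x. card {j. J j x \<le> J k x}) \<in> M \<rightarrow>\<^sub>M count_space UNIV" for k
    by (rule measurable_card) measurable
  have c2: "(\<lambda>x. card {j. J j x \<le> 0}) \<in> M \<rightarrow>\<^sub>M count_space UNIV"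
    by (rule measurable_card) measurable
  have [measurable]: "Measurable.pred M (\<lambda>x. infinite {j. J j x \<le> real_of_rat q})" for q
    unfolding infinite_nat_iff_unbounded_le by measurable
  have m1: "(\<lambda>x. C (card {j. J j x \<le> J k x}) x) \<in> M \<rightarrow>\<^sub>M count_space UNIV" for k
    by (rule measurable_compose_countable'[OF assms(2) c1]) simp
  have m2: "(\<lambda>x. C (card {j. J j x \<le> 0}) x) \<in> M \<rightarrow>\<^sub>M count_space UNIV"
    by (rule measurable_compose_countable'[OF assms(2) c2]) simp
  have p1: "Measurable.pred M (\<lambda>x. C (card {j. J j x \<le> J k x}) x \<in> S_set)" for k
    using measurable_compose[OF m1[of k], of "\<lambda>y. y \<in> S_set"] by (simp add: pred_def)
  have p2: "Measurable.pred M (\<lambda>x. C (card {j. J j x \<le> 0}) x \<in> S_set)"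
    using measurable_compose[OF m2, of "\<lambda>y. y \<in> S_set"] by (simp add: pred_def)
  have p3: "Measurable.pred M (\<lambda>x. C 0 x \<in> S_set)"
    using measurable_compose[OF assms(2)[of 0], of "\<lambda>y. y \<in> S_set"] by (simp add: pred_def)
  have p4: "Measurable.pred M (\<lambda>x. 0 \<le> J k x \<and> J k x < b)" for k by measurable
  have p5: "Measurable.pred M (\<lambda>x. 0 \<le> real_of_rat q \<and> real_of_rat q < b \<and> infinite {j. J j x \<le> real_of_rat q})" for q
    by measurable
  have "Measurable.pred M (\<lambda>x. (\<exists>k. (0 \<le> J k x \<and> J k x < b) \<and> C (card {j. J j x \<le> J k x}) x \<in> S_set)
   \<or> (0 < b \<and> C (card {j. J j x \<le> 0}) x \<in> S_set)
   \<or> (C 0 x \<in> S_set \<and> (\<exists>q::rat. 0 \<le> real_of_rat q \<and> real_of_rat q < b \<and> infinite {j. J j x \<le> real_of_rat q})))"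
    using p1 p2 p3 p4 p5 by measurable
  then show ?thesis unfolding ex_hitting_time_less_iff by (simp add: conj_assoc)
qed

lemma borel_measurable_Inf_hitting_times:
  assumes [measurable]: "\<And>k. J k \<in> borel_measurable M" "\<And>k. C k \<in> M \<rightarrow>\<^sub>M count_space UNIV"
  shows "(\<lambda>x. Inf (hitting_times J C x)) \<in> borel_measurable M"
  unfolding borel_measurable_iff_less
proof
  fix a :: real
  have bdd: "bdd_below (hitting_times J C x)" for x by (rule bdd_belowI[of _ 0]) (auto simp: hitting_times_def)
  have ne: "hitting_times J C x \<noteq> {} \<longleftrightarrow> (\<exists>n::nat. \<exists>t\<in>hitting_times J C x. t < real n)" for x
    using reals_Archimedean2 by blast
  have eq: "(Inf (hitting_times J C x) < a) \<longleftrightarrow> ((\<exists>n::nat. \<exists>t\<in>hitting_times J C x. t < real n) \<and> (\<exists>t\<in>hitting_times J C x. t < a))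
                    \<or> (\<not>(\<exists>n::nat. \<exists>t\<in>hitting_times J C x. t < real n) \<and> Inf ({}::real set) < a)" for x
  proof (cases "hitting_times J C x = {}")
    case True
    then show ?thesis by simp
  next
    case False
    then show ?thesis using cInf_less_iff[OF False bdd] ne[of x] by simp
  qed
  have "{x \<in> space M. Inf (hitting_times J C x) < a} =
        {x \<in> space M. ((\<exists>n::nat. \<exists>t\<in>hitting_times J C x. t < real n) \<and> (\<exists>t\<in>hitting_times J C x. t < a))
                    \<or> (\<not>(\<exists>n::nat. \<exists>t\<in>hitting_times J C x. t < real n) \<and> Inf ({}::real set) < a)}"
    using eq by blast
  also have "\<dots> \<in> sets M"
    using pred_ex_hitting_time_less[OF assms] unfolding pred_def[symmetric] by measurable
  finally show "{x \<in> space M. Inf (hitting_times J C x) < a} \<in> sets M" .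
qed

lemma hit_time_eq_Inf_hitting_times:
  "hit_time \<rho> x0 \<omega> = Inf (hitting_times (\<lambda>k \<omega>. jump_time \<rho> x0 \<omega> (Suc k)) (\<lambda>k \<omega>. jump_chain \<rho> x0 \<omega> k) \<omega>)"
  by (simp add: hit_time_def hitting_times_def anc_proc_def)

lemma measurable_hit_time[measurable]:
  "(\<lambda>\<omega>. hit_time \<rho> x0 \<omega>) \<in> borel_measurable path_space"
  unfolding hit_time_eq_Inf_hitting_times by (rule borel_measurable_Inf_hitting_times) auto

lemma measurable_recomb_count_hit_time:
  "(\<lambda>\<omega>. recomb_count \<rho> x0 \<omega> (hit_time \<rho> x0 \<omega>)) \<in> path_space \<rightarrow>\<^sub>M count_space UNIV"
proof -
  have p: "Measurable.pred path_space (\<lambda>\<omega>. is_recomb (jump_chain \<rho> x0 \<omega> k) (jump_chain \<rho> x0 \<omega> (Suc k)))" for k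
  proof -
    have "(\<lambda>\<omega>. (jump_chain \<rho> x0 \<omega> k, jump_chain \<rho> x0 \<omega> (Suc k))) \<in> path_space \<rightarrow>\<^sub>M count_space UNIV \<Otimes>\<^sub>M count_space UNIV"
      by measurable
    then have "(\<lambda>\<omega>. (jump_chain \<rho> x0 \<omega> k, jump_chain \<rho> x0 \<omega> (Suc k))) \<in> path_space \<rightarrow>\<^sub>M count_space UNIV"
      by (simp add: pair_measure_countable)
    from measurable_compose[OF this, of "\<lambda>(x,y). is_recomb x y"] show ?thesis
      by (simp add: pred_def)
  qed
  show ?thesis unfolding recomb_count_def
    by (rule measurable_card) (use p in measurable)
qed

lemma borel_measurable_recomb_power[measurable]:
  "(\<lambda>\<omega>. v ^ recomb_count \<rho> x0 \<omega> (hit_time \<rho> x0 \<omega>)) \<in> borel_measurable path_space"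
  using measurable_compose[OF measurable_recomb_count_hit_time, of "\<lambda>n. v ^ n" borel] by simp

lemma measurable_anc_proc:
  "(\<lambda>(\<omega>, u). anc_proc \<rho> x0 \<omega> u) \<in> path_space \<Otimes>\<^sub>M lborel \<rightarrow>\<^sub>M count_space UNIV"
proof -
  have c: "(\<lambda>z. card {k. jump_time \<rho> x0 (fst z) (Suc k) \<le> snd z}) \<in> path_space \<Otimes>\<^sub>M lborel \<rightarrow>\<^sub>M count_space UNIV"
    by (rule measurable_card) measurable
  have "(\<lambda>z. (\<lambda>i z. jump_chain \<rho> x0 (fst z) i) (card {k. jump_time \<rho> x0 (fst z) (Suc k) \<le> snd z}) z) \<in> path_space \<Otimes>\<^sub>M lborel \<rightarrow>\<^sub>M count_space UNIV"
    by (rule measurable_compose_countable'[OF _ c]) auto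
  then show ?thesis by (simp add: anc_proc_def case_prod_beta')
qed

lemma borel_measurable_lint_c_until_hit[measurable]:
  "(\<lambda>\<omega>. LINT u:{0..hit_time \<rho> x0 \<omega>}|lborel. real (snd (snd (anc_proc \<rho> x0 \<omega> u)))) \<in> borel_measurable path_space"
proof -
  have a: "(\<lambda>z. real (snd (snd (anc_proc \<rho> x0 (fst z) (snd z))))) \<in> borel_measurable (path_space \<Otimes>\<^sub>M lborel)"
    using measurable_compose[OF measurable_anc_proc[of \<rho> x0], of "\<lambda>x. real (snd (snd x))" borel]
    by (simp add: case_prod_beta')
  have i: "(\<lambda>z. indicator {0..hit_time \<rho> x0 (fst z)} (snd z) :: real) \<in> borel_measurable (path_space \<Otimes>\<^sub>M lborel)"
    unfolding indicator_def atLeastAtMost_iff by measurable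
  have "(\<lambda>(\<omega>, u). indicator {0..hit_time \<rho> x0 \<omega>} u *\<^sub>R real (snd (snd (anc_proc \<rho> x0 \<omega> u)))) \<in> borel_measurable (path_space \<Otimes>\<^sub>M lborel)"
    using borel_measurable_times[OF i a] by (simp add: case_prod_beta')
  from lborel.borel_measurable_lebesgue_integral[OF this] show ?thesis
    by (simp add: set_lebesgue_integral_def)
qed

section \<open>The noise distribution\<close>

definition Exp1 :: "real measure" where "Exp1 = density lborel (exponential_density 1)"
definition Unif01 :: "real measure" where "Unif01 = uniform_measure lborel {0..1::real}"

lemma noise_eq_Exp1_Unif01: "noise = Exp1 \<Otimes>\<^sub>M Unif01"
  by (simp add: noise_def Exp1_def Unif01_def)

lemma prob_space_Exp1: "prob_space Exp1"
  unfolding Exp1_def by (rule prob_space_exponential_density) simp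

lemma prob_space_Unif01: "prob_space Unif01"
  unfolding Unif01_def by (rule prob_space_uniform_measure) auto

lemma sets_Exp1[measurable_cong, simp]: "sets Exp1 = sets borel"
  by (simp add: Exp1_def)

lemma sets_Unif01[measurable_cong, simp]: "sets Unif01 = sets borel"
  by (simp add: Unif01_def)

lemma space_Exp1[simp]: "space Exp1 = UNIV" by (simp add: Exp1_def)
lemma space_Unif01[simp]: "space Unif01 = UNIV" by (simp add: Unif01_def)

interpretation Exp1_Unif01: pair_prob_space Exp1 Unif01
  by (intro pair_prob_space.intro pair_sigma_finite.intro prob_space_Exp1 prob_space_Unif01
      prob_space_imp_sigma_finite)

lemma prob_space_noise: "prob_space noise"
  unfolding noise_eq_Exp1_Unif01 by (rule Exp1_Unif01.prob_space_axioms)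

interpretation Noise: prob_space noise by (rule prob_space_noise)

lemma prob_space_path_space: "prob_space path_space"
  unfolding path_space_def by (rule Noise.prob_space_stream_space)

interpretation Path: prob_space path_space by (rule prob_space_path_space)

lemma nn_integral_noise_product:
  fixes g h :: "real \<Rightarrow> ennreal"
  assumes [measurable]: "g \<in> borel_measurable borel" "h \<in> borel_measurable borel"
  shows "(\<integral>\<^sup>+w. g (fst w) * h (snd w) \<partial>noise) = (\<integral>\<^sup>+x. g x \<partial>Exp1) * (\<integral>\<^sup>+y. h y \<partial>Unif01)"
proof -
  have "(\<integral>\<^sup>+w. g (fst w) * h (snd w) \<partial>noise) = (\<integral>\<^sup>+x. \<integral>\<^sup>+y. g x * h y \<partial>Unif01 \<partial>Exp1)"
    unfolding noise_eq_Exp1_Unif01 by (subst Exp1_Unif01.M2.nn_integral_fst[symmetric]) (auto simp: case_prod_beta')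
  also have "\<dots> = (\<integral>\<^sup>+x. g x * (\<integral>\<^sup>+y. h y \<partial>Unif01) \<partial>Exp1)"
    by (intro nn_integral_cong nn_integral_cmult) auto
  also have "\<dots> = (\<integral>\<^sup>+x. g x \<partial>Exp1) * (\<integral>\<^sup>+y. h y \<partial>Unif01)"
    by (rule nn_integral_multc) auto
  finally show ?thesis .
qed

lemma nn_integral_Exp1_exp_neg:
  fixes \<beta> :: real assumes b: "0 \<le> \<beta>"
  shows "(\<integral>\<^sup>+e. ennreal (exp (- \<beta> * max 0 e)) \<partial>Exp1) = ennreal (1 / (1 + \<beta>))"
proof -
  have "(\<integral>\<^sup>+e. ennreal (exp (- \<beta> * max 0 e)) \<partial>Exp1)
      = (\<integral>\<^sup>+e. ennreal (exponential_density 1 e) * ennreal (exp (- \<beta> * max 0 e)) \<partial>lborel)"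
    unfolding Exp1_def by (subst nn_integral_density) auto
  also have "\<dots> = (\<integral>\<^sup>+e. ennreal (1 / (1 + \<beta>)) * ennreal (exponential_density (1 + \<beta>) e) \<partial>lborel)"
  proof (intro nn_integral_cong)
    fix e :: real
    show "ennreal (exponential_density 1 e) * ennreal (exp (- \<beta> * max 0 e)) =
          ennreal (1 / (1 + \<beta>)) * ennreal (exponential_density (1 + \<beta>) e)"
    proof (cases "e < 0")
      case True then show ?thesis by (simp add: exponential_density_def)
    next
      case False
      have "exp (- e * 1) * exp (- \<beta> * e) = exp (- e * (1 + \<beta>))"
        by (simp add: exp_add[symmetric] algebra_simps)
      then have "1 * exp (- e * 1) * exp (- \<beta> * max 0 e) = 1 / (1 + \<beta>) * ((1 + \<beta>) * exp (- e * (1 + \<beta>)))"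
        using False b by (simp add: max_def)
      then show ?thesis using False b
        by (simp add: exponential_density_def ennreal_mult[symmetric] del: ennreal_mult)
    qed
  qed
  also have "\<dots> = ennreal (1 / (1 + \<beta>)) * (\<integral>\<^sup>+e. ennreal (exponential_density (1 + \<beta>) e) \<partial>lborel)"
    by (rule nn_integral_cmult) auto
  also have "(\<integral>\<^sup>+e. ennreal (exponential_density (1 + \<beta>) e) \<partial>lborel) = 1"
  proof -
    interpret E: prob_space "density lborel (exponential_density (1 + \<beta>))"
      using b by (intro prob_space_exponential_density) simp
    have "emeasure (density lborel (exponential_density (1 + \<beta>))) UNIV = 1"
      using E.emeasure_space_1 by simp
    then show ?thesis by (subst (asm) emeasure_density) auto
  qed
  finally show ?thesis by simp
qed

section \<open>The law of one jump\<close>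

lemma nn_integral_pick:
  fixes G :: "state \<Rightarrow> ennreal"
  assumes "\<forall>(r,y)\<in>set L. 0 \<le> r"
  shows "(\<integral>\<^sup>+s. indicator {0..<sum_list (map fst L)} s * G (pick L d s) \<partial>lborel)
       = sum_list (map (\<lambda>(r,y). ennreal r * G y) L)"
  using assms
proof (induction L)
  case Nil then show ?case by simp
next
  case (Cons a xs)
  obtain r y where a: "a = (r, y)" by (cases a)
  have r: "0 \<le> r" and xs: "\<forall>(r,y)\<in>set xs. 0 \<le> r" using Cons.prems a by auto
  define T where "T = sum_list (map fst xs)"
  have T: "0 \<le> T" unfolding T_def using xs by (induction xs) auto
  have split: "indicator {0..<r + T} s * G (pick (a # xs) d s)
      = indicator {0..<r} s * G y + indicator {r..<r + T} s * G (pick xs d (s - r))" for s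
    using r T by (auto simp: a indicator_def)
  have "(\<integral>\<^sup>+s. indicator {0..<sum_list (map fst (a # xs))} s * G (pick (a # xs) d s) \<partial>lborel)
      = (\<integral>\<^sup>+s. indicator {0..<r} s * G y + indicator {r..<r + T} s * G (pick xs d (s - r)) \<partial>lborel)"
    using r T by (intro nn_integral_cong) (auto simp: a T_def indicator_def)
  also have "\<dots> = (\<integral>\<^sup>+s. indicator {0..<r} s * G y \<partial>lborel) + (\<integral>\<^sup>+s. indicator {r..<r + T} s * G (pick xs d (s - r)) \<partial>lborel)"
    by (rule nn_integral_add) auto
  also have "(\<integral>\<^sup>+s. indicator {0..<r} s * G y \<partial>lborel) = ennreal r * G y"
    using r by (subst mult.commute) (simp add: nn_integral_cmult_indicator mult.commute)
  also have "(\<integral>\<^sup>+s. indicator {r..<r + T} s * G (pick xs d (s - r)) \<partial>lborel)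
      = (\<integral>\<^sup>+s. indicator {r..<r + T} (r + 1 * s) * G (pick xs d (r + 1 * s - r)) \<partial>lborel)"
    by (subst nn_integral_real_affine[where c=1 and t=r]) auto
  also have "\<dots> = (\<integral>\<^sup>+s. indicator {0..<T} s * G (pick xs d s) \<partial>lborel)"
    by (intro nn_integral_cong) (auto simp: indicator_def)
  also have "\<dots> = sum_list (map (\<lambda>(r,y). ennreal r * G y) xs)"
    using Cons.IH xs by (simp add: T_def)
  finally show ?case by (simp add: a)
qed

lemma ennreal_divide_sum_list:
  fixes G :: "state \<Rightarrow> ennreal"
  assumes "\<forall>(r,y)\<in>set L. 0 \<le> r" "0 < q"
  shows "ennreal (1 / q) * sum_list (map (\<lambda>(r,y). ennreal r * G y) L)
       = sum_list (map (\<lambda>(r,y). ennreal (r / q) * G y) L)"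
  using assms
proof (induction L)
  case Nil then show ?case by simp
next
  case (Cons a xs)
  obtain r y where a: "a = (r, y)" by (cases a)
  have "ennreal (1 / q) * (ennreal r * G y) = ennreal (r / q) * G y"
    using Cons.prems a by (simp add: ennreal_mult[symmetric] mult.assoc[symmetric] del: ennreal_mult)
  then show ?case using Cons by (simp add: a distrib_left)
qed

lemma anc_rates_nonneg:
  assumes "0 \<le> \<rho>"
  shows "\<forall>(r,y)\<in>set (anc_rates \<rho> x). 0 \<le> r"
proof -
  obtain a b c where x: "x = (a, b, c)" by (cases x) auto
  have "0 \<le> real a * (real a - 1) / 2" by (cases a) auto
  moreover have "0 \<le> real b * (real b - 1) / 2" by (cases b) auto
  moreover have "0 \<le> real c * (real c - 1) / 2" by (cases c) auto
  ultimately show ?thesis using assms by (auto simp: x)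
qed

lemma total_rate_nonneg: "0 \<le> \<rho> \<Longrightarrow> 0 \<le> total_rate \<rho> x"
  using anc_rates_nonneg[of \<rho> x] unfolding total_rate_def
  by (intro sum_list_nonneg) auto

lemma nn_integral_next_state:
  fixes G :: "state \<Rightarrow> ennreal"
  assumes q: "0 < total_rate \<rho> x" and r: "0 \<le> \<rho>"
  shows "(\<integral>\<^sup>+u. G (next_state \<rho> x u) \<partial>Unif01)
       = sum_list (map (\<lambda>(r,y). ennreal (r / total_rate \<rho> x) * G y) (anc_rates \<rho> x))"
proof -
  define q where "q = total_rate \<rho> x"
  define L where "L = anc_rates \<rho> x"
  have qpos: "0 < q" using q by (simp add: q_def)
  have nn: "\<forall>(r,y)\<in>set L. 0 \<le> r" using anc_rates_nonneg[OF r] by (simp add: L_def)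
  have ns: "next_state \<rho> x u = pick L x (u * q)" for u
    using qpos by (simp add: next_state_def q_def L_def)
  have "(\<integral>\<^sup>+u. G (next_state \<rho> x u) \<partial>Unif01) = (\<integral>\<^sup>+u. G (pick L x (u * q)) * indicator {0..1} u \<partial>lborel)"
    unfolding Unif01_def ns by (subst nn_integral_uniform_measure) (auto simp: divide_ennreal_def)
  also have "\<dots> = (\<integral>\<^sup>+u. G (pick L x (0 + q * u)) * indicator {0..q} (0 + q * u) \<partial>lborel)"
    using qpos by (intro nn_integral_cong) (auto simp: indicator_def mult.commute zero_le_mult_iff)
  also have "\<dots> = ennreal (1 / q) * (\<integral>\<^sup>+s. G (pick L x s) * indicator {0..q} s \<partial>lborel)"
  proof -
    have "(\<integral>\<^sup>+s. G (pick L x s) * indicator {0..q} s \<partial>lborel)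
        = ennreal \<bar>q\<bar> * (\<integral>\<^sup>+u. G (pick L x (0 + q * u)) * indicator {0..q} (0 + q * u) \<partial>lborel)"
      using qpos by (intro nn_integral_real_affine) auto
    then show ?thesis using qpos
      by (simp add: ennreal_mult[symmetric] mult.assoc[symmetric] del: ennreal_mult)
  qed
  also have "(\<integral>\<^sup>+s. G (pick L x s) * indicator {0..q} s \<partial>lborel)
      = (\<integral>\<^sup>+s. indicator {0..<sum_list (map fst L)} s * G (pick L x s) \<partial>lborel)"
    by (intro nn_integral_cong_AE, use AE_lborel_singleton[of q] in eventually_elim)
       (auto simp: indicator_def q_def total_rate_def L_def)
  also have "\<dots> = sum_list (map (\<lambda>(r,y). ennreal r * G y) L)"
    by (rule nn_integral_pick[OF nn])
  finally show ?thesis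
    using ennreal_divide_sum_list[OF nn qpos] by (simp add: q_def L_def)
qed

section \<open>Truncated functionals and the first-jump recursion\<close>

text \<open>The truncated functionals are defined through the first jump and the shifted noise
  stl \<omega>, so that conditioning on the first jump is an instance of the product structure of
  path_space.\<close>

definition first_jump :: "real \<Rightarrow> state \<Rightarrow> (real \<times> real) stream \<Rightarrow> state" where
  "first_jump \<rho> x \<omega> = next_state \<rho> x (snd (shd \<omega>))"

definition recomb_factor :: "real \<Rightarrow> state \<Rightarrow> state \<Rightarrow> real" where
  "recomb_factor v x y = (if is_recomb x y then v else 1)"

fun recomb_weight :: "real \<Rightarrow> real \<Rightarrow> nat \<Rightarrow> state \<Rightarrow> (real \<times> real) stream \<Rightarrow> real" where
  "recomb_weight v \<rho> 0 x \<omega> = 1"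
| "recomb_weight v \<rho> (Suc k) x \<omega> = (if x \<in> S_set then 1 else recomb_factor v x (first_jump \<rho> x \<omega>) * recomb_weight v \<rho> k (first_jump \<rho> x \<omega>) (stl \<omega>))"

text \<open>With the exponential variable e, the holding time in x is e / total_rate \<rho> x, so this
  factor is exp (- \<alpha> c h); the max keeps it at most 1 on the null event e < 0.\<close>

definition killing_factor :: "real \<Rightarrow> real \<Rightarrow> state \<Rightarrow> real \<Rightarrow> real" where
  "killing_factor \<alpha> \<rho> x e = exp (- (\<alpha> * real (snd (snd x)) / total_rate \<rho> x) * max 0 e)"

fun killing_weight :: "real \<Rightarrow> real \<Rightarrow> nat \<Rightarrow> state \<Rightarrow> (real \<times> real) stream \<Rightarrow> real" where
  "killing_weight \<alpha> \<rho> 0 x \<omega> = 1"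
| "killing_weight \<alpha> \<rho> (Suc k) x \<omega> = (if x \<in> S_set then 1 else killing_factor \<alpha> \<rho> x (fst (shd \<omega>)) * killing_weight \<alpha> \<rho> k (first_jump \<rho> x \<omega>) (stl \<omega>))"

fun avoids_S :: "real \<Rightarrow> nat \<Rightarrow> state \<Rightarrow> (real \<times> real) stream \<Rightarrow> bool" where
  "avoids_S \<rho> 0 x \<omega> = (x \<notin> S_set)"
| "avoids_S \<rho> (Suc k) x \<omega> = (x \<notin> S_set \<and> avoids_S \<rho> k (first_jump \<rho> x \<omega>) (stl \<omega>))"

lemma measurable_first_jump[measurable]: "first_jump \<rho> x \<in> path_space \<rightarrow>\<^sub>M count_space UNIV"
  unfolding first_jump_def path_space_def by measurable

lemma measurable_stl_path_space[measurable]: "stl \<in> path_space \<rightarrow>\<^sub>M path_space"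
  unfolding path_space_def by (rule measurable_stl)

lemma measurable_recomb_weight[measurable]: "recomb_weight v \<rho> k x \<in> borel_measurable path_space"
proof (induction k arbitrary: x)
  case 0 then show ?case by simp
next
  case (Suc k)
  have "(\<lambda>\<omega>. (\<lambda>y \<omega>. recomb_factor v x y * recomb_weight v \<rho> k y (stl \<omega>)) (first_jump \<rho> x \<omega>) \<omega>) \<in> borel_measurable path_space"
    by (rule measurable_compose_countable'[OF _ measurable_first_jump]) (auto intro!: borel_measurable_times measurable_compose[OF measurable_stl_path_space Suc.IH])
  then have "(\<lambda>\<omega>. if x \<in> S_set then 1 else recomb_factor v x (first_jump \<rho> x \<omega>) * recomb_weight v \<rho> k (first_jump \<rho> x \<omega>) (stl \<omega>)) \<in> borel_measurable path_space"
    by simp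
  then show ?case by (simp add: fun_eq_iff[symmetric])
qed

lemma measurable_killing_weight[measurable]: "killing_weight \<alpha> \<rho> k x \<in> borel_measurable path_space"
proof (induction k arbitrary: x)
  case 0 then show ?case by simp
next
  case (Suc k)
  have b: "(\<lambda>\<omega>. killing_factor \<alpha> \<rho> x (fst (shd \<omega>))) \<in> borel_measurable path_space"
    unfolding killing_factor_def path_space_def by measurable
  have "(\<lambda>\<omega>. (\<lambda>y \<omega>. killing_factor \<alpha> \<rho> x (fst (shd \<omega>)) * killing_weight \<alpha> \<rho> k y (stl \<omega>)) (first_jump \<rho> x \<omega>) \<omega>) \<in> borel_measurable path_space"
    by (rule measurable_compose_countable'[OF _ measurable_first_jump]) (auto intro!: borel_measurable_times b measurable_compose[OF measurable_stl_path_space Suc.IH])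
  then have "(\<lambda>\<omega>. if x \<in> S_set then 1 else killing_factor \<alpha> \<rho> x (fst (shd \<omega>)) * killing_weight \<alpha> \<rho> k (first_jump \<rho> x \<omega>) (stl \<omega>)) \<in> borel_measurable path_space"
    by simp
  then show ?case by (simp add: fun_eq_iff[symmetric])
qed

lemma measurable_avoids_S[measurable]: "Measurable.pred path_space (avoids_S \<rho> k x)"
proof (induction k arbitrary: x)
  case 0 then show ?case by simp
next
  case (Suc k)
  have "(\<lambda>\<omega>. (\<lambda>y \<omega>. x \<notin> S_set \<and> avoids_S \<rho> k y (stl \<omega>)) (first_jump \<rho> x \<omega>) \<omega>) \<in> path_space \<rightarrow>\<^sub>M count_space UNIV"
    by (rule measurable_compose_countable'[OF _ measurable_first_jump]) (auto intro!: pred_intros_logic measurable_compose[OF measurable_stl_path_space Suc.IH])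
  then show ?case by (simp add: fun_eq_iff[symmetric])
qed

lemma recomb_weight_nonneg: "0 \<le> v \<Longrightarrow> 0 \<le> recomb_weight v \<rho> k x \<omega>"
  by (induction k arbitrary: x \<omega>) (auto simp: recomb_factor_def)

lemma killing_weight_nonneg: "0 \<le> killing_weight \<alpha> \<rho> k x \<omega>"
  by (induction k arbitrary: x \<omega>) (auto simp: killing_factor_def)

lemma nn_integral_path_space_shd_stl:
  assumes [measurable]: "f \<in> borel_measurable path_space"
  shows "(\<integral>\<^sup>+\<omega>. f \<omega> \<partial>path_space) = (\<integral>\<^sup>+w. (\<integral>\<^sup>+\<omega>. f (w ## \<omega>) \<partial>path_space) \<partial>noise)"
  unfolding path_space_def by (rule Noise.nn_integral_stream_space) (use assms in \<open>simp add: path_space_def\<close>)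

definition E_recomb_weight :: "real \<Rightarrow> real \<Rightarrow> nat \<Rightarrow> state \<Rightarrow> ennreal" where
  "E_recomb_weight v \<rho> k x = (\<integral>\<^sup>+\<omega>. ennreal (recomb_weight v \<rho> k x \<omega>) \<partial>path_space)"

definition E_killing_weight :: "real \<Rightarrow> real \<Rightarrow> nat \<Rightarrow> state \<Rightarrow> ennreal" where
  "E_killing_weight \<alpha> \<rho> k x = (\<integral>\<^sup>+\<omega>. ennreal (killing_weight \<alpha> \<rho> k x \<omega>) \<partial>path_space)"

definition E_avoids_S :: "real \<Rightarrow> nat \<Rightarrow> state \<Rightarrow> ennreal" where
  "E_avoids_S \<rho> k x = (\<integral>\<^sup>+\<omega>. indicator {\<omega>. avoids_S \<rho> k x \<omega>} \<omega> \<partial>path_space)"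

lemma nn_integral_Exp1_one: "(\<integral>\<^sup>+x. 1 \<partial>Exp1) = 1"
  using prob_space.emeasure_space_1[OF prob_space_Exp1] by simp

lemma nn_integral_noise_snd:
  fixes h :: "real \<Rightarrow> ennreal"
  assumes [measurable]: "h \<in> borel_measurable borel"
  shows "(\<integral>\<^sup>+w. h (snd w) \<partial>noise) = (\<integral>\<^sup>+y. h y \<partial>Unif01)"
  using nn_integral_noise_product[of "\<lambda>_. 1" h] nn_integral_Exp1_one by simp

lemma E_recomb_weight_Suc:
  assumes v: "0 \<le> v" and x: "x \<notin> S_set" and q: "0 < total_rate \<rho> x" and r: "0 \<le> \<rho>"
  shows "E_recomb_weight v \<rho> (Suc k) x = sum_list (map (\<lambda>(r,y). ennreal (r / total_rate \<rho> x) * (ennreal (recomb_factor v x y) * E_recomb_weight v \<rho> k y)) (anc_rates \<rho> x))"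
proof -
  have "E_recomb_weight v \<rho> (Suc k) x = (\<integral>\<^sup>+w. (\<integral>\<^sup>+\<omega>. ennreal (recomb_weight v \<rho> (Suc k) x (w ## \<omega>)) \<partial>path_space) \<partial>noise)"
    unfolding E_recomb_weight_def by (rule nn_integral_path_space_shd_stl) measurable
  also have "\<dots> = (\<integral>\<^sup>+w. (\<lambda>y. ennreal (recomb_factor v x y) * E_recomb_weight v \<rho> k y) (next_state \<rho> x (snd w)) \<partial>noise)"
    using x v unfolding E_recomb_weight_def
    by (intro nn_integral_cong)
       (auto simp: first_jump_def ennreal_mult recomb_factor_def recomb_weight_nonneg intro!: nn_integral_cmult)
  also have "\<dots> = (\<integral>\<^sup>+u. (\<lambda>y. ennreal (recomb_factor v x y) * E_recomb_weight v \<rho> k y) (next_state \<rho> x u) \<partial>Unif01)"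
    by (rule nn_integral_noise_snd) (rule measurable_compose[OF measurable_next_state], simp)
  also have "\<dots> = sum_list (map (\<lambda>(r,y). ennreal (r / total_rate \<rho> x) * (ennreal (recomb_factor v x y) * E_recomb_weight v \<rho> k y)) (anc_rates \<rho> x))"
    by (rule nn_integral_next_state[OF q r])
  finally show ?thesis .
qed

lemma E_killing_weight_Suc:
  assumes x: "x \<notin> S_set" and q: "0 < total_rate \<rho> x" and r: "0 \<le> \<rho>" and a: "0 \<le> \<alpha>"
  shows "E_killing_weight \<alpha> \<rho> (Suc k) x = ennreal (1 / (1 + \<alpha> * real (snd (snd x)) / total_rate \<rho> x)) *
     sum_list (map (\<lambda>(r,y). ennreal (r / total_rate \<rho> x) * E_killing_weight \<alpha> \<rho> k y) (anc_rates \<rho> x))"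
proof -
  have "E_killing_weight \<alpha> \<rho> (Suc k) x = (\<integral>\<^sup>+w. (\<integral>\<^sup>+\<omega>. ennreal (killing_weight \<alpha> \<rho> (Suc k) x (w ## \<omega>)) \<partial>path_space) \<partial>noise)"
    unfolding E_killing_weight_def by (rule nn_integral_path_space_shd_stl) measurable
  also have "\<dots> = (\<integral>\<^sup>+w. ennreal (killing_factor \<alpha> \<rho> x (fst w)) * (\<lambda>y. E_killing_weight \<alpha> \<rho> k y) (next_state \<rho> x (snd w)) \<partial>noise)"
    using x unfolding E_killing_weight_def
    by (intro nn_integral_cong)
       (auto simp: first_jump_def ennreal_mult killing_weight_nonneg killing_factor_def intro!: nn_integral_cmult)
  also have "\<dots> = (\<integral>\<^sup>+e. ennreal (killing_factor \<alpha> \<rho> x e) \<partial>Exp1) * (\<integral>\<^sup>+u. (\<lambda>y. E_killing_weight \<alpha> \<rho> k y) (next_state \<rho> x u) \<partial>Unif01)"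
    by (rule nn_integral_noise_product) (auto simp: killing_factor_def intro: measurable_compose[OF measurable_next_state])
  also have "(\<integral>\<^sup>+e. ennreal (killing_factor \<alpha> \<rho> x e) \<partial>Exp1) = ennreal (1 / (1 + \<alpha> * real (snd (snd x)) / total_rate \<rho> x))"
    unfolding killing_factor_def using a q by (subst nn_integral_Exp1_exp_neg) auto
  also have "(\<integral>\<^sup>+u. (\<lambda>y. E_killing_weight \<alpha> \<rho> k y) (next_state \<rho> x u) \<partial>Unif01) = sum_list (map (\<lambda>(r,y). ennreal (r / total_rate \<rho> x) * E_killing_weight \<alpha> \<rho> k y) (anc_rates \<rho> x))"
    by (rule nn_integral_next_state[OF q r])
  finally show ?thesis .
qed

lemma E_avoids_S_Suc:
  assumes x: "x \<notin> S_set" and q: "0 < total_rate \<rho> x" and r: "0 \<le> \<rho>"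
  shows "E_avoids_S \<rho> (Suc k) x = sum_list (map (\<lambda>(r,y). ennreal (r / total_rate \<rho> x) * E_avoids_S \<rho> k y) (anc_rates \<rho> x))"
proof -
  have "E_avoids_S \<rho> (Suc k) x = (\<integral>\<^sup>+w. (\<integral>\<^sup>+\<omega>. indicator {\<omega>. avoids_S \<rho> (Suc k) x \<omega>} (w ## \<omega>) \<partial>path_space) \<partial>noise)"
    unfolding E_avoids_S_def by (rule nn_integral_path_space_shd_stl) measurable
  also have "\<dots> = (\<integral>\<^sup>+w. (\<lambda>y. E_avoids_S \<rho> k y) (next_state \<rho> x (snd w)) \<partial>noise)"
    using x unfolding E_avoids_S_def
    by (intro nn_integral_cong) (auto simp: first_jump_def indicator_def)
  also have "\<dots> = (\<integral>\<^sup>+u. (\<lambda>y. E_avoids_S \<rho> k y) (next_state \<rho> x u) \<partial>Unif01)"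
    by (rule nn_integral_noise_snd) (rule measurable_compose[OF measurable_next_state], simp)
  also have "\<dots> = sum_list (map (\<lambda>(r,y). ennreal (r / total_rate \<rho> x) * E_avoids_S \<rho> k y) (anc_rates \<rho> x))"
    by (rule nn_integral_next_state[OF q r])
  finally show ?thesis .
qed

lemma E_recomb_weight_S: "x \<in> S_set \<Longrightarrow> E_recomb_weight v \<rho> (Suc k) x = 1"
  by (simp add: E_recomb_weight_def Path.emeasure_space_1)
lemma E_killing_weight_S: "x \<in> S_set \<Longrightarrow> E_killing_weight \<alpha> \<rho> (Suc k) x = 1"
  by (simp add: E_killing_weight_def Path.emeasure_space_1)
lemma E_recomb_weight_0: "E_recomb_weight v \<rho> 0 x = 1"
  by (simp add: E_recomb_weight_def Path.emeasure_space_1)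
lemma E_killing_weight_0: "E_killing_weight \<alpha> \<rho> 0 x = 1"
  by (simp add: E_killing_weight_def Path.emeasure_space_1)

section \<open>A finite invariant box of states\<close>

definition anc_box :: "nat \<Rightarrow> nat \<Rightarrow> state set" where
  "anc_box L M = {(a,b,c). 1 \<le> c + min a b \<and> a + c \<le> L \<and> b + c \<le> M}"

definition lineages :: "state \<Rightarrow> nat" where "lineages x = (case x of (a,b,c) \<Rightarrow> a+b+c)"

lemma finite_anc_box: "finite (anc_box L M)"
proof -
  have "anc_box L M \<subseteq> {..L} \<times> {..M} \<times> {..L}" by (auto simp: anc_box_def)
  then show ?thesis by (rule finite_subset) auto
qed

lemma lineages_le: "x \<in> anc_box L M \<Longrightarrow> lineages x \<le> L + M"
  by (auto simp: anc_box_def lineages_def)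

lemma lineages_pos: "x \<in> anc_box L M \<Longrightarrow> 1 \<le> lineages x"
  by (auto simp: anc_box_def lineages_def)

lemma coalescence_rate_pos: "0 < real a * real c + real a * (real a - 1) / 2 \<Longrightarrow> 1 \<le> a \<and> (1 \<le> c \<or> 2 \<le> a)"
proof (rule ccontr)
  assume "0 < real a * real c + real a * (real a - 1) / 2" "\<not> (1 \<le> a \<and> (1 \<le> c \<or> 2 \<le> a))"
  then have "a = 0 \<or> (a = 1 \<and> c = 0)" by auto
  then show False using \<open>0 < _\<close> by auto
qed

lemma c_coalescence_rate_pos: "0 < real c * (real c - 1) / 2 \<Longrightarrow> 2 \<le> c"
proof (rule ccontr)
  assume "0 < real c * (real c - 1) / 2" "\<not> 2 \<le> c"
  then have "c = 0 \<or> c = 1" by auto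
  then show False using \<open>0 < _\<close> by auto
qed

lemma anc_box_closed:
  assumes x: "x \<in> anc_box L M" and ry: "(r, y) \<in> set (anc_rates \<rho> x)" and r: "0 < r" and rho: "0 \<le> \<rho>"
  shows "y \<in> anc_box L M"
proof -
  obtain a b c where xe: "x = (a, b, c)" by (cases x) auto
  have inv: "1 \<le> c + min a b" "a + c \<le> L" "b + c \<le> M" using x by (auto simp: xe anc_box_def)
  from ry consider
      "r = real c * \<rho> / 2" "y = (a + 1, b + 1, c - 1)"
    | "r = real a * real b" "y = (a - 1, b - 1, c + 1)"
    | "r = real a * real c + real a * (real a - 1) / 2" "y = (a - 1, b, c)"
    | "r = real b * real c + real b * (real b - 1) / 2" "y = (a, b - 1, c)"
    | "r = real c * (real c - 1) / 2" "y = (a, b, c - 1)"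
    by (auto simp: xe)
  then show ?thesis
  proof cases
    case 1
    then have "0 < c" using r rho by (cases c) auto
    then show ?thesis using inv 1 by (auto simp: anc_box_def)
  next
    case 2
    then have "0 < a" "0 < b" using r by (auto simp: zero_less_mult_iff)
    then show ?thesis using inv 2 by (auto simp: anc_box_def)
  next
    case 3
    then have "1 \<le> a \<and> (1 \<le> c \<or> 2 \<le> a)" using r coalescence_rate_pos by auto
    then show ?thesis using inv 3 by (auto simp: anc_box_def)
  next
    case 4
    then have "1 \<le> b \<and> (1 \<le> c \<or> 2 \<le> b)" using r coalescence_rate_pos[of b c] by auto
    then show ?thesis using inv 4 by (auto simp: anc_box_def)
  next
    case 5
    then have "2 \<le> c" using r c_coalescence_rate_pos by auto
    then show ?thesis using inv 5 by (auto simp: anc_box_def)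
  qed
qed

lemma coalescence_rate_ge_1:
  fixes i j :: nat
  assumes "1 \<le> i" "1 \<le> j"
  shows "1 \<le> real i * real j + real i * (real i - 1) / 2"
proof -
  have "1 \<le> real i * real j" using mult_mono[of 1 "real i" 1 "real j"] assms by simp
  moreover have "0 \<le> real i * (real i - 1) / 2" using assms by simp
  ultimately show ?thesis by linarith
qed

lemma lineage_reducing_move:
  assumes x: "x \<in> anc_box L M" and nS: "x \<notin> S_set"
  shows "\<exists>r y. (r, y) \<in> set (anc_rates \<rho> x) \<and> 1 \<le> r \<and> lineages y + 1 = lineages x"
proof -
  obtain a b c where xe: "x = (a, b, c)" by (cases x) auto
  have inv: "1 \<le> c + min a b" using x by (auto simp: xe anc_box_def)
  have "c = 0 \<or> c = 1 \<or> 2 \<le> c" by linarith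
  consider "1 \<le> a" "1 \<le> c" | "1 \<le> b" "1 \<le> c" | "2 \<le> c" | "c = 0" "1 \<le> a" "1 \<le> b"
    using inv nS \<open>c = 0 \<or> c = 1 \<or> 2 \<le> c\<close> by (auto simp: xe S_set_def)
  then show ?thesis
  proof cases
    case 1
    then show ?thesis using coalescence_rate_ge_1[of a c]
      by (intro exI[of _ "real a * real c + real a * (real a - 1) / 2"] exI[of _ "(a - 1, b, c)"])
         (auto simp: xe lineages_def)
  next
    case 2
    then show ?thesis using coalescence_rate_ge_1[of b c]
      by (intro exI[of _ "real b * real c + real b * (real b - 1) / 2"] exI[of _ "(a, b - 1, c)"])
         (auto simp: xe lineages_def)
  next
    case 3
    then have "1 \<le> real c * (real c - 1) / 2"
      using mult_mono[of 2 "real c" 1 "real c - 1"] by simp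
    then show ?thesis using 3
      by (intro exI[of _ "real c * (real c - 1) / 2"] exI[of _ "(a, b, c - 1)"]) (auto simp: xe lineages_def)
  next
    case 4
    then have "1 \<le> real a * real b" using mult_mono[of 1 "real a" 1 "real b"] by simp
    then show ?thesis using 4
      by (intro exI[of _ "real a * real b"] exI[of _ "(a - 1, b - 1, c + 1)"]) (auto simp: xe lineages_def)
  qed
qed

lemma member_le_sum_list_real:
  fixes L :: "real list"
  assumes "r \<in> set L" "\<forall>x\<in>set L. 0 \<le> x"
  shows "r \<le> sum_list L"
proof -
  obtain L1 L2 where "L = L1 @ r # L2" using split_list[OF assms(1)] by blast
  moreover have "0 \<le> sum_list L1" "0 \<le> sum_list L2"
    using assms(2) calculation by (auto intro!: sum_list_nonneg)
  ultimately show ?thesis by simp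
qed

lemma total_rate_ge1:
  assumes "x \<in> anc_box L M" "x \<notin> S_set" "0 \<le> \<rho>"
  shows "1 \<le> total_rate \<rho> x"
proof -
  obtain r y where ry: "(r, y) \<in> set (anc_rates \<rho> x)" "1 \<le> r" using lineage_reducing_move[OF assms(1,2)] by blast
  have "r \<le> total_rate \<rho> x" unfolding total_rate_def
    using ry anc_rates_nonneg[OF assms(3), of x] by (intro member_le_sum_list_real) force+
  then show ?thesis using ry by simp
qed

definition max_total_rate :: "real \<Rightarrow> nat \<Rightarrow> nat \<Rightarrow> real" where
  "max_total_rate \<rho> L M = Max (insert 1 (total_rate \<rho> ` anc_box L M))"

lemma total_rate_le_max: "x \<in> anc_box L M \<Longrightarrow> total_rate \<rho> x \<le> max_total_rate \<rho> L M"
  unfolding max_total_rate_def by (intro Max_ge) (auto simp: finite_anc_box)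

lemma max_total_rate_ge_1: "1 \<le> max_total_rate \<rho> L M"
  unfolding max_total_rate_def by (intro Max_ge) (auto simp: finite_anc_box)

lemma pick_cases:
  assumes "0 \<le> s"
  shows "pick L d s = d \<or> (\<exists>r. (r, pick L d s) \<in> set L \<and> 0 < r)"
  using assms
proof (induction L arbitrary: s)
  case Nil then show ?case by simp
next
  case (Cons a xs)
  obtain r y where a: "a = (r, y)" by (cases a)
  show ?case
  proof (cases "s < r")
    case True then show ?thesis using Cons.prems by (auto simp: a)
  next
    case False
    then have "0 \<le> s - r" by simp
    from Cons.IH[OF this] show ?thesis using False by (auto simp: a)
  qed
qed

lemma next_state_in_anc_box:
  assumes x: "x \<in> anc_box L M" and u: "0 \<le> u" and rho: "0 \<le> \<rho>"
  shows "next_state \<rho> x u \<in> anc_box L M"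
proof (cases "total_rate \<rho> x = 0")
  case True then show ?thesis using x by (simp add: next_state_def)
next
  case False
  then have q: "0 \<le> u * total_rate \<rho> x" using u total_rate_nonneg[OF rho] by simp
  from pick_cases[OF q, of "anc_rates \<rho> x" x]
  consider "pick (anc_rates \<rho> x) x (u * total_rate \<rho> x) = x"
    | r where "(r, pick (anc_rates \<rho> x) x (u * total_rate \<rho> x)) \<in> set (anc_rates \<rho> x)" "0 < r"
    by blast
  then show ?thesis
  proof cases
    case 1 then show ?thesis using False x by (simp add: next_state_def)
  next
    case 2 then show ?thesis using False anc_box_closed[OF x 2(1) 2(2) rho] by (simp add: next_state_def)
  qed
qed

section \<open>Equality of the truncated expectations\<close>

lemma sum_list_map2:
  assumes "list_all2 P L L'" "\<And>z z'. P z z' \<Longrightarrow> f z = g z'"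
  shows "sum_list (map f L) = sum_list (map g L')"
  using assms(1) by (induction rule: list_all2_induct) (auto simp: assms(2))

lemma ennreal_rate_factor_eq:
  fixes P :: ennreal
  assumes "r * f = r'" "0 \<le> r" "0 \<le> f" "0 < q'" "q = q' + \<gamma>" "0 \<le> \<gamma>"
  shows "ennreal (r / q) * (ennreal f * P) = ennreal (1 / (1 + \<gamma> / q')) * (ennreal (r' / q') * P)"
proof -
  have q: "0 < q" using assms by simp
  have "1 / (1 + \<gamma> / q') * (r' / q') = r' / q"
    using assms by (simp add: field_simps)
  moreover have "r / q * f = r' / q" using assms(1) by simp
  moreover have "0 \<le> r' / q'" using assms by (auto intro!: divide_nonneg_pos simp: mult_nonneg_nonneg[of r f, simplified assms(1)])
  moreover have "0 \<le> r / q" using assms q by simp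
  moreover have "0 \<le> 1 / (1 + \<gamma> / q')" using assms by simp
  ultimately have e1: "ennreal (r / q) * ennreal f = ennreal (r' / q)"
      and e2: "ennreal (1 / (1 + \<gamma> / q')) * ennreal (r' / q') = ennreal (r' / q)"
    using assms by (simp_all only: ennreal_mult[symmetric])
  have "ennreal (r / q) * (ennreal f * P) = (ennreal (r / q) * ennreal f) * P"
    by (simp only: mult.assoc)
  also have "\<dots> = (ennreal (1 / (1 + \<gamma> / q')) * ennreal (r' / q')) * P"
    by (simp only: e1 e2)
  finally show ?thesis by (simp only: mult.assoc)
qed

lemma sum_list_positive_rates_cong:
  fixes \<Phi> \<Psi> :: "state \<Rightarrow> ennreal"
  assumes "\<And>r y. (r, y) \<in> set L \<Longrightarrow> 0 < r \<Longrightarrow> \<Phi> y = \<Psi> y" and q: "0 < q"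
  shows "sum_list (map (\<lambda>(r,y). ennreal (r / q) * (F y * \<Phi> y)) L) = sum_list (map (\<lambda>(r,y). ennreal (r / q) * (F y * \<Psi> y)) L)"
proof -
  have "(\<lambda>(r,y). ennreal (r / q) * (F y * \<Phi> y)) z = (\<lambda>(r,y). ennreal (r / q) * (F y * \<Psi> y)) z" if "z \<in> set L" for z
  proof -
    obtain r y where z: "z = (r, y)" by (cases z)
    show ?thesis
    proof (cases "0 < r")
      case True then show ?thesis using assms that z by simp
    next
      case False
      then have "ennreal (r / q) = 0" using q by (auto simp: divide_nonpos_pos ennreal_eq_0_iff)
      then show ?thesis by (simp add: z)
    qed
  qed
  then show ?thesis by (intro arg_cong[where f=sum_list] map_cong) auto
qed

text \<open>Recombination is the only jump whose rate depends on \<rho>. Thinning it by the factor v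
  yields the rates of the (v \<rho>)-chain, and the thinned-out rate \<rho> (1 - v) c / 2 is the
  killing rate \<alpha> c of the right-hand side.\<close>

lemma sum_recomb_rates_eq_killing_rates:
  fixes \<Phi> :: "state \<Rightarrow> ennreal"
  assumes v: "0 \<le> v" "v \<le> 1" and rho: "0 \<le> \<rho>" and q': "0 < total_rate (v * \<rho>) x"
  shows "sum_list (map (\<lambda>(r,y). ennreal (r / total_rate \<rho> x) * (ennreal (recomb_factor v x y) * \<Phi> y)) (anc_rates \<rho> x))
       = ennreal (1 / (1 + \<rho> * (1 - v) / 2 * real (snd (snd x)) / total_rate (v * \<rho>) x)) *
         sum_list (map (\<lambda>(r,y). ennreal (r / total_rate (v * \<rho>) x) * \<Phi> y) (anc_rates (v * \<rho>) x))"
proof -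
  obtain a b c where xe: "x = (a, b, c)" by (cases x) auto
  define \<gamma> where "\<gamma> = \<rho> * (1 - v) / 2 * real c"
  have g: "0 \<le> \<gamma>" using v rho by (simp add: \<gamma>_def)
  have qq: "total_rate \<rho> x = total_rate (v * \<rho>) x + \<gamma>"
    by (simp add: \<gamma>_def xe total_rate_def) (simp add: field_simps)
  have "sum_list (map (\<lambda>(r,y). ennreal (r / total_rate \<rho> x) * (ennreal (recomb_factor v x y) * \<Phi> y)) (anc_rates \<rho> x))
      = sum_list (map (\<lambda>(r,y). ennreal (1 / (1 + \<gamma> / total_rate (v * \<rho>) x)) * (ennreal (r / total_rate (v * \<rho>) x) * \<Phi> y)) (anc_rates (v * \<rho>) x))"
  proof (rule sum_list_map2[where P="\<lambda>z z'. snd z = snd z' \<and> fst z * recomb_factor v x (snd z) = fst z' \<and> 0 \<le> fst z"])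
    show "list_all2 (\<lambda>z z'. snd z = snd z' \<and> fst z * recomb_factor v x (snd z) = fst z' \<and> 0 \<le> fst z) (anc_rates \<rho> x) (anc_rates (v * \<rho>) x)"
      using anc_rates_nonneg[OF rho, of x] by (auto simp: xe recomb_factor_def)
  next
    fix z z' :: "real \<times> state"
    assume "snd z = snd z' \<and> fst z * recomb_factor v x (snd z) = fst z' \<and> 0 \<le> fst z"
    then show "(\<lambda>(r,y). ennreal (r / total_rate \<rho> x) * (ennreal (recomb_factor v x y) * \<Phi> y)) z =
      (\<lambda>(r,y). ennreal (1 / (1 + \<gamma> / total_rate (v * \<rho>) x)) * (ennreal (r / total_rate (v * \<rho>) x) * \<Phi> y)) z'"
      using ennreal_rate_factor_eq[OF _ _ _ q' qq g] v by (auto simp: case_prod_beta recomb_factor_def)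
  qed
  also have "\<dots> = ennreal (1 / (1 + \<gamma> / total_rate (v * \<rho>) x)) * sum_list (map (\<lambda>(r,y). ennreal (r / total_rate (v * \<rho>) x) * \<Phi> y) (anc_rates (v * \<rho>) x))"
    by (simp add: sum_list_const_mult[symmetric] case_prod_unfold)
  finally show ?thesis by (simp add: \<gamma>_def xe add_divide_distrib)
qed

lemma E_recomb_weight_eq_E_killing_weight:
  assumes v: "0 \<le> v" "v \<le> 1" and rho: "0 \<le> \<rho>"
  shows "x \<in> anc_box L M \<Longrightarrow> E_recomb_weight v \<rho> k x = E_killing_weight (\<rho> * (1 - v) / 2) (v * \<rho>) k x"
proof (induction k arbitrary: x)
  case 0 then show ?case by (simp add: E_recomb_weight_0 E_killing_weight_0)
next
  case (Suc k)
  show ?case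
  proof (cases "x \<in> S_set")
    case True then show ?thesis by (simp add: E_recomb_weight_S E_killing_weight_S)
  next
    case nS: False
    have vr: "0 \<le> v * \<rho>" and a: "0 \<le> \<rho> * (1 - v) / 2" using v rho by simp_all
    have q: "1 \<le> total_rate \<rho> x" "1 \<le> total_rate (v * \<rho>) x"
      using total_rate_ge1[OF Suc.prems nS rho] total_rate_ge1[OF Suc.prems nS vr] .
    have "E_recomb_weight v \<rho> (Suc k) x = sum_list (map (\<lambda>(r,y). ennreal (r / total_rate \<rho> x) *
        (ennreal (recomb_factor v x y) * E_recomb_weight v \<rho> k y)) (anc_rates \<rho> x))"
      using E_recomb_weight_Suc[OF v(1) nS _ rho] q by simp
    also have "\<dots> = sum_list (map (\<lambda>(r,y). ennreal (r / total_rate \<rho> x) *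
        (ennreal (recomb_factor v x y) * E_killing_weight (\<rho> * (1 - v) / 2) (v * \<rho>) k y)) (anc_rates \<rho> x))"
      by (rule sum_list_positive_rates_cong) (use Suc.IH anc_box_closed[OF Suc.prems _ _ rho] q in auto)
    also have "\<dots> = E_killing_weight (\<rho> * (1 - v) / 2) (v * \<rho>) (Suc k) x"
      using sum_recomb_rates_eq_killing_rates[OF v rho] E_killing_weight_Suc[OF nS _ vr a] q by simp
    finally show ?thesis .
  qed
qed

section \<open>Almost sure hitting of S\<close>

lemma space_path_space: "space path_space = UNIV"
  by (simp add: path_space_def space_stream_space noise_def space_pair_measure)

definition avoid_prob :: "real \<Rightarrow> nat \<Rightarrow> state \<Rightarrow> real" where
  "avoid_prob \<rho> k x = measure path_space {\<omega>. avoids_S \<rho> k x \<omega>}"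

lemma avoids_S_sets[measurable]: "{\<omega>. avoids_S \<rho> k x \<omega>} \<in> sets path_space"
  using measurable_avoids_S[of \<rho> k x] by (simp add: pred_def space_path_space)

lemma E_avoids_S_eq_avoid_prob: "E_avoids_S \<rho> k x = ennreal (avoid_prob \<rho> k x)"
  unfolding E_avoids_S_def avoid_prob_def by (simp add: Path.emeasure_eq_measure)

lemma avoid_prob_nonneg: "0 \<le> avoid_prob \<rho> k x" by (simp add: avoid_prob_def)
lemma avoid_prob_le_1: "avoid_prob \<rho> k x \<le> 1" by (simp add: avoid_prob_def)

lemma avoids_S_not_in_S: "avoids_S \<rho> k x \<omega> \<Longrightarrow> x \<notin> S_set"
  by (cases k) auto

lemma avoid_prob_S: "x \<in> S_set \<Longrightarrow> avoid_prob \<rho> k x = 0"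
proof -
  assume "x \<in> S_set"
  then have "{\<omega>. avoids_S \<rho> k x \<omega>} = {}" using avoids_S_not_in_S[of \<rho> k x] by blast
  then show ?thesis by (simp add: avoid_prob_def)
qed

lemma avoids_S_Suc_imp: "avoids_S \<rho> (Suc k) x \<omega> \<Longrightarrow> avoids_S \<rho> k x \<omega>"
  by (induction k arbitrary: x \<omega>) auto

lemma avoids_S_add_imp: "avoids_S \<rho> (k + n) x \<omega> \<Longrightarrow> avoids_S \<rho> k x \<omega>"
  by (induction n) (auto simp del: avoids_S.simps dest: avoids_S_Suc_imp)

lemma avoid_prob_add_le: "avoid_prob \<rho> (k + n) x \<le> avoid_prob \<rho> k x"
  unfolding avoid_prob_def by (rule Path.finite_measure_mono) (auto dest: avoids_S_add_imp)

lemma sum_list_ennreal_real: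
  fixes g :: "state \<Rightarrow> real"
  assumes "\<forall>(r,y)\<in>set L. 0 \<le> r" "0 < q" "\<And>y. 0 \<le> g y"
  shows "sum_list (map (\<lambda>(r,y). ennreal (r / q) * ennreal (g y)) L) = ennreal (sum_list (map (\<lambda>(r,y). r / q * g y) L))"
  using assms(1)
proof (induction L)
  case Nil then show ?case by simp
next
  case (Cons a xs)
  obtain r y where a: "a = (r, y)" by (cases a)
  have nn: "0 \<le> sum_list (map (\<lambda>(r,y). r / q * g y) xs)"
    using Cons.prems assms(2,3) by (intro sum_list_nonneg) auto
  have r: "0 \<le> r" using Cons.prems a by auto
  then show ?case using Cons nn assms(2,3) a
    by (simp add: ennreal_mult[symmetric] ennreal_plus[symmetric] del: ennreal_plus ennreal_mult)
qed

lemma avoid_prob_Suc: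
  assumes x: "x \<notin> S_set" and q: "0 < total_rate \<rho> x" and r: "0 \<le> \<rho>"
  shows "avoid_prob \<rho> (Suc k) x = sum_list (map (\<lambda>(r,y). r / total_rate \<rho> x * avoid_prob \<rho> k y) (anc_rates \<rho> x))"
proof -
  have "ennreal (avoid_prob \<rho> (Suc k) x) = ennreal (sum_list (map (\<lambda>(r,y). r / total_rate \<rho> x * avoid_prob \<rho> k y) (anc_rates \<rho> x)))"
    using E_avoids_S_Suc[OF x q r, of k] sum_list_ennreal_real[OF anc_rates_nonneg[OF r] q, of "avoid_prob \<rho> k"]
    by (simp add: E_avoids_S_eq_avoid_prob avoid_prob_nonneg)
  moreover have "0 \<le> sum_list (map (\<lambda>(r,y). r / total_rate \<rho> x * avoid_prob \<rho> k y) (anc_rates \<rho> x))"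
    using anc_rates_nonneg[OF r, of x] q by (intro sum_list_nonneg) (auto simp: avoid_prob_nonneg)
  ultimately show ?thesis using avoid_prob_nonneg by simp
qed

lemma sum_list_rate_weighted_le:
  fixes z :: "state \<Rightarrow> real"
  assumes "\<forall>(r,y)\<in>set L. 0 \<le> r \<and> (0 < r \<longrightarrow> z y \<le> c)" "0 < q"
  shows "sum_list (map (\<lambda>(r,y). r / q * z y) L) \<le> sum_list (map fst L) / q * c"
  using assms(1)
proof (induction L)
  case Nil then show ?case by simp
next
  case (Cons a xs)
  obtain r y where a: "a = (r, y)" by (cases a)
  have r: "0 \<le> r" "0 < r \<longrightarrow> z y \<le> c" using Cons.prems a by auto
  have "r / q * z y \<le> r / q * c"
  proof (cases "r = 0")
    case False
    then show ?thesis using r assms(2) by (intro mult_left_mono) auto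
  qed simp
  then show ?case using Cons a by (simp add: add_divide_distrib distrib_right)
qed

lemma sum_list_rate_weighted_le_deficit:
  fixes z :: "state \<Rightarrow> real"
  assumes le: "\<forall>(r,y)\<in>set L. 0 \<le> r \<and> (0 < r \<longrightarrow> z y \<le> c)" and mem: "(r0, y0) \<in> set L"
    and z0: "z y0 \<le> c'" and q: "sum_list (map fst L) = q" "0 < q"
  shows "sum_list (map (\<lambda>(r,y). r / q * z y) L) \<le> c - r0 / q * (c - c')"
proof -
  obtain L1 L2 where L: "L = L1 @ (r0, y0) # L2" using split_list[OF mem] by blast
  have r0: "0 \<le> r0" using le mem by auto
  have "sum_list (map (\<lambda>(r,y). r / q * z y) L1) \<le> sum_list (map fst L1) / q * c"
    using le L q(2) by (intro sum_list_rate_weighted_le) auto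
  moreover have "sum_list (map (\<lambda>(r,y). r / q * z y) L2) \<le> sum_list (map fst L2) / q * c"
    using le L q(2) by (intro sum_list_rate_weighted_le) auto
  moreover have "r0 / q * z y0 \<le> r0 / q * c'"
    using r0 q z0 by (intro mult_left_mono) auto
  moreover have "c - r0 / q * (c - c') = sum_list (map fst L1) / q * c + r0 / q * c' + sum_list (map fst L2) / q * c"
  proof -
    have e: "sum_list (map fst L1) + r0 + sum_list (map fst L2) = q" using q L by simp
    have "sum_list (map fst L1) / q * c + r0 / q * c + sum_list (map fst L2) / q * c
        = (sum_list (map fst L1) + r0 + sum_list (map fst L2)) / q * c"
      by (simp add: add_divide_distrib distrib_right)
    also have "\<dots> = c" using e q(2) by simp
    finally have h1: "sum_list (map fst L1) / q * c + r0 / q * c + sum_list (map fst L2) / q * c = c" .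
    have h2: "r0 / q * (c - c') = r0 / q * c - r0 / q * c'" by (simp add: right_diff_distrib)
    show ?thesis using h1 h2 by linarith
  qed
  ultimately show ?thesis using L by simp
qed

lemma avoid_prob_Suc_le_deficit:
  assumes rho: "0 \<le> \<rho>" and x: "x \<in> anc_box L M" "x \<notin> S_set"
    and bound: "\<forall>y\<in>anc_box L M. avoid_prob \<rho> k y \<le> c"
    and move: "(r0, y0) \<in> set (anc_rates \<rho> x)" "1 \<le> r0"
  shows "avoid_prob \<rho> (Suc k) x \<le> c - (c - avoid_prob \<rho> k y0) / max_total_rate \<rho> L M"
proof -
  define q where "q = total_rate \<rho> x"
  have q1: "1 \<le> q" unfolding q_def by (rule total_rate_ge1[OF x rho])
  have qQ: "q \<le> max_total_rate \<rho> L M" unfolding q_def by (rule total_rate_le_max[OF x(1)])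
  have others: "\<forall>(r,y)\<in>set (anc_rates \<rho> x). 0 \<le> r \<and> (0 < r \<longrightarrow> avoid_prob \<rho> k y \<le> c)"
    using anc_rates_nonneg[OF rho, of x] anc_box_closed[OF x(1) _ _ rho] bound by fastforce
  have "avoid_prob \<rho> (Suc k) x = sum_list (map (\<lambda>(r,y). r / q * avoid_prob \<rho> k y) (anc_rates \<rho> x))"
    using avoid_prob_Suc[OF x(2) _ rho] q1 by (simp add: q_def)
  also have "\<dots> \<le> c - r0 / q * (c - avoid_prob \<rho> k y0)"
    by (rule sum_list_rate_weighted_le_deficit[OF others move(1)]) (use q1 in \<open>auto simp: q_def total_rate_def\<close>)
  also have "\<dots> \<le> c - (c - avoid_prob \<rho> k y0) / max_total_rate \<rho> L M"
  proof -
    have "1 / max_total_rate \<rho> L M \<le> r0 / q"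
      using q1 qQ move(2) by (simp add: frac_le)
    moreover have "0 \<le> c - avoid_prob \<rho> k y0"
      using bound anc_box_closed[OF x(1) move(1) _ rho] move(2) by simp
    ultimately show ?thesis using mult_right_mono by fastforce
  qed
  finally show ?thesis .
qed

text \<open>Each state of the box not in S has a jump of rate at least 1 that removes a lineage, so
  within lineages x \<le> L + M jumps S is reached with probability at least \<delta> ^ lineages x.\<close>

lemma avoid_prob_contract:
  fixes L M :: nat and \<rho> c :: real
  assumes rho: "0 \<le> \<rho>" and bound: "\<forall>y\<in>anc_box L M. avoid_prob \<rho> k y \<le> c" and c: "0 \<le> c"
  defines "\<delta> \<equiv> 1 / max_total_rate \<rho> L M"
  shows "x \<in> anc_box L M \<Longrightarrow> lineages x \<le> n \<Longrightarrow> avoid_prob \<rho> (k + n) x \<le> c * (1 - \<delta> ^ lineages x)"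
proof (induction n arbitrary: x)
  case 0 then show ?case using lineages_pos[OF "0.prems"(1)] by simp
next
  case (Suc n)
  have d: "0 < \<delta>" "\<delta> \<le> 1" using max_total_rate_ge_1[of \<rho> L M] by (auto simp: \<delta>_def)
  show ?case
  proof (cases "x \<in> S_set")
    case True
    then show ?thesis using c d by (simp add: avoid_prob_S power_le_one)
  next
    case nS: False
    obtain r0 y0 where move: "(r0, y0) \<in> set (anc_rates \<rho> x)" "1 \<le> r0" "lineages y0 + 1 = lineages x"
      using lineage_reducing_move[OF Suc.prems(1) nS] by blast
    have IH: "avoid_prob \<rho> (k + n) y0 \<le> c * (1 - \<delta> ^ lineages y0)"
      using Suc.IH anc_box_closed[OF Suc.prems(1) move(1) _ rho] move Suc.prems(2) by simp
    have "\<forall>y\<in>anc_box L M. avoid_prob \<rho> (k + n) y \<le> c"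
      using bound avoid_prob_add_le[of \<rho> k n] by (blast intro: order_trans)
    from avoid_prob_Suc_le_deficit[OF rho Suc.prems(1) nS this move(1,2)]
    have "avoid_prob \<rho> (k + Suc n) x \<le> c - \<delta> * (c - avoid_prob \<rho> (k + n) y0)"
      by (simp add: \<delta>_def)
    also have "\<dots> \<le> c - \<delta> * (c * \<delta> ^ lineages y0)"
      using IH d by (intro diff_left_mono mult_left_mono) (auto simp: algebra_simps)
    also have "\<dots> = c * (1 - \<delta> ^ lineages x)"
      using move(3)[symmetric] by (simp add: algebra_simps)
    finally show ?thesis .
  qed
qed

lemma avoid_prob_geometric:
  fixes L M :: nat and \<rho> :: real
  assumes rho: "0 \<le> \<rho>"
  defines "\<delta> \<equiv> 1 / max_total_rate \<rho> L M"
  shows "\<forall>x\<in>anc_box L M. avoid_prob \<rho> (j * (L + M)) x \<le> (1 - \<delta> ^ (L + M)) ^ j"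
proof (induction j)
  case 0 then show ?case by (simp add: avoid_prob_le_1)
next
  case (Suc j)
  have d: "0 < \<delta>" "\<delta> \<le> 1" using max_total_rate_ge_1[of \<rho> L M] by (auto simp: \<delta>_def)
  have c: "0 \<le> (1 - \<delta> ^ (L + M)) ^ j" using d by (simp add: power_le_one)
  show ?case
  proof
    fix x assume x: "x \<in> anc_box L M"
    have "avoid_prob \<rho> (j * (L + M) + (L + M)) x \<le> (1 - \<delta> ^ (L + M)) ^ j * (1 - \<delta> ^ lineages x)"
      using avoid_prob_contract[OF rho Suc.IH c x lineages_le[OF x]] by (simp add: \<delta>_def)
    also have "\<dots> \<le> (1 - \<delta> ^ (L + M)) ^ j * (1 - \<delta> ^ (L + M))"
      using c d lineages_le[OF x] by (intro mult_left_mono) (auto intro: power_decreasing)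
    finally show "avoid_prob \<rho> (Suc j * (L + M)) x \<le> (1 - \<delta> ^ (L + M)) ^ Suc j"
      by (simp add: add.commute mult.commute)
  qed
qed

lemma AE_hits_S:
  assumes rho: "0 \<le> \<rho>" and x: "x \<in> anc_box L M"
  shows "AE \<omega> in path_space. \<exists>k. \<not> avoids_S \<rho> k x \<omega>"
proof -
  define \<delta> where "\<delta> = 1 / max_total_rate \<rho> L M"
  have d: "0 < \<delta>" "\<delta> \<le> 1" using max_total_rate_ge_1[of \<rho> L M] by (auto simp: \<delta>_def)
  define N where "N = {\<omega>. \<forall>k. avoids_S \<rho> k x \<omega>}"
  have Ns: "N \<in> sets path_space"
  proof -
    have "Measurable.pred path_space (\<lambda>\<omega>. \<forall>k. avoids_S \<rho> k x \<omega>)" by measurable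
    then show ?thesis by (simp add: pred_def space_path_space N_def)
  qed
  have le: "measure path_space N \<le> (1 - \<delta> ^ (L + M)) ^ j" for j
  proof -
    have "measure path_space N \<le> avoid_prob \<rho> (j * (L + M)) x"
      unfolding avoid_prob_def N_def by (rule Path.finite_measure_mono) auto
    also have "\<dots> \<le> (1 - \<delta> ^ (L + M)) ^ j" using avoid_prob_geometric[OF rho] x by (simp add: \<delta>_def)
    finally show ?thesis .
  qed
  have "(\<lambda>j. (1 - \<delta> ^ (L + M)) ^ j) \<longlonglongrightarrow> 0"
  proof (rule LIMSEQ_power_zero)
    have "0 < \<delta> ^ (L + M)" "\<delta> ^ (L + M) \<le> 1" using d by (auto simp: power_le_one)
    then show "norm (1 - \<delta> ^ (L + M)) < 1" by simp
  qed
  then have "measure path_space N \<le> 0"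
    by (rule LIMSEQ_le_const) (use le in auto)
  then have "emeasure path_space N = 0"
    using Path.emeasure_eq_measure[of N] measure_nonneg[of path_space N] by simp
  then show ?thesis
    using AE_iff_measurable[OF Ns, of "\<lambda>\<omega>. \<exists>k. \<not> avoids_S \<rho> k x \<omega>"] by (simp add: N_def space_path_space)
qed

section \<open>Pathwise limits of the truncations\<close>

definition regular_noise :: "(real \<times> real) stream \<Rightarrow> bool" where
  "regular_noise \<omega> = (\<forall>i. 0 < fst (\<omega> !! i) \<and> 0 \<le> snd (\<omega> !! i))"

lemma AE_regular_noise: "AE \<omega> in path_space. regular_noise \<omega>"
proof -
  have e: "AE x in Exp1. 0 < x"
    unfolding Exp1_def
    by (subst AE_density) (auto intro: AE_mp[OF AE_lborel_singleton[of 0]] simp: exponential_density_def)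
  have u: "AE y in Unif01. 0 \<le> y"
    unfolding Unif01_def by (subst AE_uniform_measure) auto
  have "AE w in noise. 0 < fst w \<and> 0 \<le> snd w"
    unfolding noise_eq_Exp1_Unif01
    by (rule Exp1_Unif01.AE_pair_measure) (measurable, auto intro: AE_mp[OF e] AE_mp[OF u] simp: space_pair_measure)
  then have "AE \<omega> in path_space. stream_all (\<lambda>w. 0 < fst w \<and> 0 \<le> snd w) \<omega>"
    unfolding path_space_def by (intro Noise.AE_stream_all) auto
  then show ?thesis
    by eventually_elim (auto simp: regular_noise_def stream_all_def sset_range)
qed

lemma jump_chain_Suc_first_jump: "jump_chain \<rho> x \<omega> (Suc j) = jump_chain \<rho> (first_jump \<rho> x \<omega>) (stl \<omega>) j"
proof (induction j)
  case 0 then show ?case by (simp add: first_jump_def)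
next
  case (Suc j) then show ?case by simp
qed

lemma avoids_S_iff: "avoids_S \<rho> k x \<omega> \<longleftrightarrow> (\<forall>j\<le>k. jump_chain \<rho> x \<omega> j \<notin> S_set)"
proof (induction k arbitrary: x \<omega>)
  case 0 then show ?case by simp
next
  case (Suc k)
  have "(\<forall>j\<le>Suc k. jump_chain \<rho> x \<omega> j \<notin> S_set) \<longleftrightarrow>
        (x \<notin> S_set \<and> (\<forall>j\<le>k. jump_chain \<rho> x \<omega> (Suc j) \<notin> S_set))"
    by (simp only: less_Suc_eq_le[symmetric] All_less_Suc2 jump_chain.simps(1))
  then show ?case using Suc.IH by (simp add: jump_chain_Suc_first_jump del: jump_chain.simps)
qed

lemma recomb_weight_eq_prod:
  assumes "jump_chain \<rho> x \<omega> K \<in> S_set" "\<forall>i<K. jump_chain \<rho> x \<omega> i \<notin> S_set" "K \<le> k"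
  shows "recomb_weight v \<rho> k x \<omega> = (\<Prod>j<K. recomb_factor v (jump_chain \<rho> x \<omega> j) (jump_chain \<rho> x \<omega> (Suc j)))"
  using assms
proof (induction K arbitrary: x \<omega> k)
  case 0
  then show ?case by (cases k) auto
next
  case (Suc K)
  obtain k' where k0: "k = Suc k'" using Suc.prems(3) by (cases k) auto
  have k: "k = Suc k'" "K \<le> k'" using k0 Suc.prems(3) by auto
  have x: "x \<notin> S_set" using Suc.prems(2) by force
  have IH: "recomb_weight v \<rho> k' (first_jump \<rho> x \<omega>) (stl \<omega>) = (\<Prod>j<K. recomb_factor v (jump_chain \<rho> (first_jump \<rho> x \<omega>) (stl \<omega>) j) (jump_chain \<rho> (first_jump \<rho> x \<omega>) (stl \<omega>) (Suc j)))"
    using Suc.prems k by (intro Suc.IH) (auto simp: jump_chain_Suc_first_jump[symmetric] simp del: jump_chain.simps)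
  have "(\<Prod>j<Suc K. recomb_factor v (jump_chain \<rho> x \<omega> j) (jump_chain \<rho> x \<omega> (Suc j)))
     = recomb_factor v (jump_chain \<rho> x \<omega> 0) (jump_chain \<rho> x \<omega> (Suc 0)) * (\<Prod>j<K. recomb_factor v (jump_chain \<rho> x \<omega> (Suc j)) (jump_chain \<rho> x \<omega> (Suc (Suc j))))"
    by (rule prod.lessThan_Suc_shift)
  also have "\<dots> = recomb_factor v x (first_jump \<rho> x \<omega>) * (\<Prod>j<K. recomb_factor v (jump_chain \<rho> (first_jump \<rho> x \<omega>) (stl \<omega>) j) (jump_chain \<rho> (first_jump \<rho> x \<omega>) (stl \<omega>) (Suc j)))"
    by (simp only: jump_chain_Suc_first_jump jump_chain.simps(1))
  also have "\<dots> = recomb_weight v \<rho> k x \<omega>" using x IH by (simp add: k)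
  finally show ?case ..
qed

lemma killing_weight_eq_prod:
  assumes "jump_chain \<rho> x \<omega> K \<in> S_set" "\<forall>i<K. jump_chain \<rho> x \<omega> i \<notin> S_set" "K \<le> k"
  shows "killing_weight \<alpha> \<rho> k x \<omega> = (\<Prod>j<K. killing_factor \<alpha> \<rho> (jump_chain \<rho> x \<omega> j) (fst (\<omega> !! j)))"
  using assms
proof (induction K arbitrary: x \<omega> k)
  case 0
  then show ?case by (cases k) auto
next
  case (Suc K)
  obtain k' where k0: "k = Suc k'" using Suc.prems(3) by (cases k) auto
  have k: "k = Suc k'" "K \<le> k'" using k0 Suc.prems(3) by auto
  have x: "x \<notin> S_set" using Suc.prems(2) by force
  have IH: "killing_weight \<alpha> \<rho> k' (first_jump \<rho> x \<omega>) (stl \<omega>) = (\<Prod>j<K. killing_factor \<alpha> \<rho> (jump_chain \<rho> (first_jump \<rho> x \<omega>) (stl \<omega>) j) (fst (stl \<omega> !! j)))"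
    using Suc.prems k by (intro Suc.IH) (auto simp: jump_chain_Suc_first_jump[symmetric] simp del: jump_chain.simps)
  have "(\<Prod>j<Suc K. killing_factor \<alpha> \<rho> (jump_chain \<rho> x \<omega> j) (fst (\<omega> !! j)))
     = killing_factor \<alpha> \<rho> (jump_chain \<rho> x \<omega> 0) (fst (\<omega> !! 0)) * (\<Prod>j<K. killing_factor \<alpha> \<rho> (jump_chain \<rho> x \<omega> (Suc j)) (fst (\<omega> !! Suc j)))"
    by (rule prod.lessThan_Suc_shift)
  also have "\<dots> = killing_factor \<alpha> \<rho> x (fst (shd \<omega>)) * (\<Prod>j<K. killing_factor \<alpha> \<rho> (jump_chain \<rho> (first_jump \<rho> x \<omega>) (stl \<omega>) j) (fst (stl \<omega> !! j)))"
    by (simp only: jump_chain_Suc_first_jump jump_chain.simps(1) snth.simps)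
  also have "\<dots> = killing_weight \<alpha> \<rho> k x \<omega>" using x IH by (simp add: k)
  finally show ?case ..
qed

lemma jump_chain_in_anc_box:
  assumes "regular_noise \<omega>" "x \<in> anc_box L M" "0 \<le> \<rho>"
  shows "jump_chain \<rho> x \<omega> j \<in> anc_box L M"
proof (induction j)
  case 0 then show ?case using assms by simp
next
  case (Suc j)
  then show ?case using assms next_state_in_anc_box[OF Suc] by (simp add: regular_noise_def)
qed

lemma holding_time_pos:
  assumes "regular_noise \<omega>" "0 \<le> \<rho>"
  shows "0 < holding_time \<rho> x \<omega> j"
  using assms total_rate_nonneg[OF assms(2), of "jump_chain \<rho> x \<omega> j"]
  by (auto simp: holding_time_def regular_noise_def Let_def intro!: divide_pos_pos)

lemma jump_time_Suc: "jump_time \<rho> x \<omega> (Suc j) = jump_time \<rho> x \<omega> j + holding_time \<rho> x \<omega> j"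
  by (simp add: jump_time_def)

lemma strict_mono_jump_time:
  assumes "regular_noise \<omega>" "0 \<le> \<rho>"
  shows "strict_mono (jump_time \<rho> x \<omega>)"
  by (rule strict_monoI_Suc) (simp add: jump_time_Suc holding_time_pos[OF assms])

lemma prod_recomb_factor:
  "(\<Prod>j<K. recomb_factor v (f j) (f (Suc j))) = v ^ card {j. j < K \<and> is_recomb (f j) (f (Suc j))}"
proof (induction K)
  case 0 then show ?case by simp
next
  case (Suc K)
  have "{j. j < Suc K \<and> is_recomb (f j) (f (Suc j))} =
        (if is_recomb (f K) (f (Suc K)) then insert K {j. j < K \<and> is_recomb (f j) (f (Suc j))} else {j. j < K \<and> is_recomb (f j) (f (Suc j))})"
    by (auto simp: less_Suc_eq)
  then show ?case using Suc by (simp add: recomb_factor_def)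
qed

lemma is_recomb_into_S: "is_recomb x y \<Longrightarrow> y \<in> S_set \<Longrightarrow> x \<in> S_set"
  by (cases x) (auto simp: S_set_def)

lemma jump_time_0: "jump_time \<rho> x \<omega> 0 = 0" by (simp add: jump_time_def)

lemma anc_proc_eq_jump_chain:
  assumes sm: "strict_mono (jump_time \<rho> x \<omega>)"
    and t: "jump_time \<rho> x \<omega> j \<le> t" "t < jump_time \<rho> x \<omega> (Suc j)"
  shows "anc_proc \<rho> x \<omega> t = jump_chain \<rho> x \<omega> j"
proof -
  have "{k. jump_time \<rho> x \<omega> (Suc k) \<le> t} = {..<j}"
  proof safe
    fix k assume "jump_time \<rho> x \<omega> (Suc k) \<le> t"
    then have "jump_time \<rho> x \<omega> (Suc k) < jump_time \<rho> x \<omega> (Suc j)" using t by linarith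
    then show "k < j" using strict_mono_less[OF sm] by simp
  next
    fix k assume "k < j"
    then have "jump_time \<rho> x \<omega> (Suc k) \<le> jump_time \<rho> x \<omega> j" using strict_mono_less_eq[OF sm] by simp
    then show "jump_time \<rho> x \<omega> (Suc k) \<le> t" using t by linarith
  qed
  then show ?thesis by (simp add: anc_proc_def)
qed

lemma hit_time_eq_jump_time:
  assumes sm: "strict_mono (jump_time \<rho> x \<omega>)"
    and K: "jump_chain \<rho> x \<omega> K \<in> S_set" "\<forall>i<K. jump_chain \<rho> x \<omega> i \<notin> S_set"
  shows "hit_time \<rho> x \<omega> = jump_time \<rho> x \<omega> K"
  unfolding hit_time_def
proof (rule cInf_eq_minimum)
  have "{k. jump_time \<rho> x \<omega> (Suc k) \<le> jump_time \<rho> x \<omega> K} = {..<K}"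
    using strict_mono_less_eq[OF sm] by auto
  moreover have "0 \<le> jump_time \<rho> x \<omega> K"
    using strict_mono_less_eq[OF sm, of 0 K] by (simp add: jump_time_0)
  ultimately show "jump_time \<rho> x \<omega> K \<in> {t. 0 \<le> t \<and> anc_proc \<rho> x \<omega> t \<in> S_set}"
    using K by (simp add: anc_proc_def)
next
  fix t assume "t \<in> {t. 0 \<le> t \<and> anc_proc \<rho> x \<omega> t \<in> S_set}"
  then have t: "0 \<le> t" "anc_proc \<rho> x \<omega> t \<in> S_set" by auto
  show "jump_time \<rho> x \<omega> K \<le> t"
  proof (rule ccontr)
    assume "\<not> jump_time \<rho> x \<omega> K \<le> t"
    then have lt: "t < jump_time \<rho> x \<omega> K" by simp
    then have K0: "K \<noteq> 0" using t by (cases K) (auto simp: jump_time_0)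
    have sub: "{k. jump_time \<rho> x \<omega> (Suc k) \<le> t} \<subseteq> {..<K - 1}"
    proof
      fix k assume "k \<in> {k. jump_time \<rho> x \<omega> (Suc k) \<le> t}"
      then have "jump_time \<rho> x \<omega> (Suc k) < jump_time \<rho> x \<omega> K" using lt by simp
      then have "Suc k < K" using strict_mono_less[OF sm] by simp
      then show "k \<in> {..<K - 1}" by simp
    qed
    have "card {k. jump_time \<rho> x \<omega> (Suc k) \<le> t} \<le> K - 1"
      using card_mono[OF _ sub] by simp
    then have "card {k. jump_time \<rho> x \<omega> (Suc k) \<le> t} < K" using K0 by simp
    then show False using K(2) t(2) by (auto simp: anc_proc_def)
  qed
qed

lemma recomb_count_jump_time:
  assumes sm: "strict_mono (jump_time \<rho> x \<omega>)"
    and K: "jump_chain \<rho> x \<omega> K \<in> S_set" "\<forall>i<K. jump_chain \<rho> x \<omega> i \<notin> S_set"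
  shows "recomb_count \<rho> x \<omega> (jump_time \<rho> x \<omega> K) =
         card {j. j < K \<and> is_recomb (jump_chain \<rho> x \<omega> j) (jump_chain \<rho> x \<omega> (Suc j))}"
proof -
  have "{k. jump_time \<rho> x \<omega> (Suc k) < jump_time \<rho> x \<omega> K \<and> is_recomb (jump_chain \<rho> x \<omega> k) (jump_chain \<rho> x \<omega> (Suc k))}
      = {j. j < K \<and> is_recomb (jump_chain \<rho> x \<omega> j) (jump_chain \<rho> x \<omega> (Suc j))}"
  proof safe
    fix k assume "jump_time \<rho> x \<omega> (Suc k) < jump_time \<rho> x \<omega> K"
    then show "k < K" using strict_mono_less[OF sm] by simp
  next
    fix k assume k: "k < K" and r: "is_recomb (jump_chain \<rho> x \<omega> k) (jump_chain \<rho> x \<omega> (Suc k))"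
    have "Suc k \<noteq> K"
    proof
      assume "Suc k = K"
      then have "jump_chain \<rho> x \<omega> (Suc k) \<in> S_set" using K by simp
      then have "jump_chain \<rho> x \<omega> k \<in> S_set" using is_recomb_into_S[OF r] by simp
      then show False using K(2) k by simp
    qed
    then have "Suc k < K" using k by simp
    then show "jump_time \<rho> x \<omega> (Suc k) < jump_time \<rho> x \<omega> K" using strict_mono_less[OF sm] by simp
  qed
  then show ?thesis by (simp add: recomb_count_def)
qed

lemma has_integral_step_function:
  fixes t g :: "nat \<Rightarrow> real" and f :: "real \<Rightarrow> real"
  assumes t0: "t 0 = 0" and sm: "strict_mono t"
    and feq: "\<And>j u. t j \<le> u \<Longrightarrow> u < t (Suc j) \<Longrightarrow> f u = g j"
  shows "(f has_integral (\<Sum>j<K. g j * (t (Suc j) - t j))) {0..t K}"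
proof (induction K)
  case 0 then show ?case using t0 has_integral_refl(2)[of f 0] by simp
next
  case (Suc K)
  have le: "t K \<le> t (Suc K)" using strict_mono_less_eq[OF sm] by simp
  have pos: "0 \<le> t K" using strict_mono_less_eq[OF sm, of 0 K] t0 by simp
  have c: "((\<lambda>u. g K) has_integral (g K * (t (Suc K) - t K))) {t K..t (Suc K)}"
    using has_integral_const_real[of "g K" "t K" "t (Suc K)"] le by (simp add: mult.commute)
  have "(f has_integral (g K * (t (Suc K) - t K))) {t K..t (Suc K)}"
    by (rule has_integral_spike_finite[of "{t (Suc K)}", OF _ _ c]) (auto intro!: feq)
  from has_integral_combine[OF pos le Suc.IH this] show ?case by simp
qed

lemma set_borel_integral_eq_has_integral_nonneg:
  fixes f :: "real \<Rightarrow> real"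
  assumes [measurable]: "f \<in> borel_measurable borel" and nn: "\<And>x. 0 \<le> f x"
    and I: "(f has_integral I) {a..b}"
  shows "(LINT x:{a..b}|lborel. f x) = I"
proof -
  have I0: "0 \<le> I" using has_integral_nonneg[OF I] nn by auto
  have h: "((\<lambda>x. indicator {a..b} x * f x) has_integral I) UNIV"
  proof -
    have "(\<lambda>x. indicator {a..b} x * f x) = (\<lambda>x. if x \<in> {a..b} then f x else 0)"
      by (auto simp: indicator_def fun_eq_iff)
    then show ?thesis using has_integral_restrict_UNIV[THEN iffD2, OF I] by simp
  qed
  have "integral\<^sup>N lborel (\<lambda>x. indicator {a..b} x * f x) = I"
    by (rule nn_integral_has_integral_lborel[OF _ _ h]) (auto simp: nn)
  moreover have "(LINT x:{a..b}|lborel. f x) = enn2real (\<integral>\<^sup>+x. ennreal (indicator {a..b} x * f x) \<partial>lborel)"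
    unfolding set_lebesgue_integral_def by (subst integral_eq_nn_integral) (auto simp: nn)
  ultimately show ?thesis using I0 by simp
qed

lemma recomb_weight_le_1: "0 \<le> v \<Longrightarrow> v \<le> 1 \<Longrightarrow> recomb_weight v \<rho> k x \<omega> \<le> 1"
proof (induction k arbitrary: x \<omega>)
  case (Suc k)
  have "recomb_weight v \<rho> k (first_jump \<rho> x \<omega>) (stl \<omega>) \<le> 1" by (rule Suc.IH[OF Suc.prems])
  moreover have "0 \<le> recomb_weight v \<rho> k (first_jump \<rho> x \<omega>) (stl \<omega>)" by (rule recomb_weight_nonneg[OF Suc.prems(1)])
  moreover have "0 \<le> recomb_factor v x (first_jump \<rho> x \<omega>)" "recomb_factor v x (first_jump \<rho> x \<omega>) \<le> 1" using Suc.prems by (auto simp: recomb_factor_def)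
  ultimately show ?case by (auto intro: mult_le_one)
qed simp

lemma killing_factor_le_1: "0 \<le> \<alpha> \<Longrightarrow> 0 \<le> \<rho> \<Longrightarrow> killing_factor \<alpha> \<rho> x e \<le> 1"
  using total_rate_nonneg[of \<rho> x] by (simp add: killing_factor_def)

lemma killing_weight_le_1: "0 \<le> \<alpha> \<Longrightarrow> 0 \<le> \<rho> \<Longrightarrow> killing_weight \<alpha> \<rho> k x \<omega> \<le> 1"
proof (induction k arbitrary: x \<omega>)
  case (Suc k)
  have "killing_weight \<alpha> \<rho> k (first_jump \<rho> x \<omega>) (stl \<omega>) \<le> 1" by (rule Suc.IH[OF Suc.prems])
  moreover have "0 \<le> killing_weight \<alpha> \<rho> k (first_jump \<rho> x \<omega>) (stl \<omega>)" by (rule killing_weight_nonneg)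
  moreover have "0 \<le> killing_factor \<alpha> \<rho> x (fst (shd \<omega>))" by (simp add: killing_factor_def)
  moreover have "killing_factor \<alpha> \<rho> x (fst (shd \<omega>)) \<le> 1" by (rule killing_factor_le_1[OF Suc.prems])
  ultimately show ?case by (auto intro: mult_le_one)
qed simp

lemma first_hit_S:
  assumes "\<exists>k. \<not> avoids_S \<rho> k x \<omega>"
  obtains K where "jump_chain \<rho> x \<omega> K \<in> S_set" "\<forall>i<K. jump_chain \<rho> x \<omega> i \<notin> S_set"
proof -
  from assms obtain j where j: "jump_chain \<rho> x \<omega> j \<in> S_set" by (auto simp: avoids_S_iff)
  define K where "K = (LEAST j. jump_chain \<rho> x \<omega> j \<in> S_set)"
  have "jump_chain \<rho> x \<omega> K \<in> S_set" unfolding K_def using j by (rule LeastI)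
  moreover have "\<forall>i<K. jump_chain \<rho> x \<omega> i \<notin> S_set" unfolding K_def using not_less_Least by blast
  ultimately show ?thesis using that by blast
qed

lemma recomb_weight_limit:
  assumes g: "regular_noise \<omega>" "0 \<le> \<rho>" and h: "\<exists>k. \<not> avoids_S \<rho> k x \<omega>"
  shows "(\<lambda>k. recomb_weight v \<rho> k x \<omega>) \<longlonglongrightarrow> v ^ recomb_count \<rho> x \<omega> (hit_time \<rho> x \<omega>)"
proof -
  obtain K where K: "jump_chain \<rho> x \<omega> K \<in> S_set" "\<forall>i<K. jump_chain \<rho> x \<omega> i \<notin> S_set"
    using first_hit_S[OF h] by blast
  have sm: "strict_mono (jump_time \<rho> x \<omega>)" by (rule strict_mono_jump_time[OF g])
  have eq: "v ^ recomb_count \<rho> x \<omega> (hit_time \<rho> x \<omega>) = (\<Prod>j<K. recomb_factor v (jump_chain \<rho> x \<omega> j) (jump_chain \<rho> x \<omega> (Suc j)))"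
    using hit_time_eq_jump_time[OF sm K] recomb_count_jump_time[OF sm K] prod_recomb_factor[of v "jump_chain \<rho> x \<omega>" K] by simp
  have "eventually (\<lambda>k. recomb_weight v \<rho> k x \<omega> = v ^ recomb_count \<rho> x \<omega> (hit_time \<rho> x \<omega>)) sequentially"
    unfolding eventually_sequentially by (intro exI[of _ K] allI impI) (simp add: recomb_weight_eq_prod[OF K] eq)
  then show ?thesis by (rule tendsto_eventually)
qed

lemma lint_c_until_hit_eq_sum:
  assumes sm: "strict_mono (jump_time \<rho> x \<omega>)"
    and K: "jump_chain \<rho> x \<omega> K \<in> S_set" "\<forall>i<K. jump_chain \<rho> x \<omega> i \<notin> S_set"
  shows "(LINT u:{0..hit_time \<rho> x \<omega>}|lborel. real (snd (snd (anc_proc \<rho> x \<omega> u))))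
       = (\<Sum>j<K. real (snd (snd (jump_chain \<rho> x \<omega> j))) * holding_time \<rho> x \<omega> j)"
proof -
  have "(\<lambda>z. real (snd (snd (anc_proc \<rho> x (fst z) (snd z))))) \<in> borel_measurable (path_space \<Otimes>\<^sub>M lborel)"
    using measurable_compose[OF measurable_anc_proc[of \<rho> x], of "\<lambda>x. real (snd (snd x))" borel]
    by (simp add: case_prod_beta')
  from measurable_Pair2[OF this, of \<omega>]
  have fm: "(\<lambda>u. real (snd (snd (anc_proc \<rho> x \<omega> u)))) \<in> borel_measurable borel"
    by (simp add: space_path_space)
  have "((\<lambda>u. real (snd (snd (anc_proc \<rho> x \<omega> u)))) has_integral
        (\<Sum>j<K. real (snd (snd (jump_chain \<rho> x \<omega> j))) * (jump_time \<rho> x \<omega> (Suc j) - jump_time \<rho> x \<omega> j)))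
        {0..jump_time \<rho> x \<omega> K}"
    by (rule has_integral_step_function[OF jump_time_0 sm]) (simp add: anc_proc_eq_jump_chain[OF sm])
  then show ?thesis
    unfolding hit_time_eq_jump_time[OF sm K]
    by (subst set_borel_integral_eq_has_integral_nonneg[OF fm]) (auto simp: jump_time_Suc)
qed

lemma killing_factor_jump_chain:
  assumes "regular_noise \<omega>" "0 \<le> \<rho>" "x \<in> anc_box L M" "jump_chain \<rho> x \<omega> j \<notin> S_set"
  shows "killing_factor \<alpha> \<rho> (jump_chain \<rho> x \<omega> j) (fst (\<omega> !! j))
       = exp (- \<alpha> * (real (snd (snd (jump_chain \<rho> x \<omega> j))) * holding_time \<rho> x \<omega> j))"
proof -
  have "1 \<le> total_rate \<rho> (jump_chain \<rho> x \<omega> j)"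
    using total_rate_ge1[OF jump_chain_in_anc_box[OF assms(1,3,2)] assms(4,2)] .
  moreover have "0 < fst (\<omega> !! j)" using assms(1) by (simp add: regular_noise_def)
  ultimately show ?thesis by (simp add: killing_factor_def holding_time_def Let_def)
qed

lemma killing_weight_limit:
  assumes g: "regular_noise \<omega>" "0 \<le> \<rho>" and x: "x \<in> anc_box L M" and h: "\<exists>k. \<not> avoids_S \<rho> k x \<omega>"
  shows "(\<lambda>k. killing_weight \<alpha> \<rho> k x \<omega>) \<longlonglongrightarrow> exp (- \<alpha> * (LINT u:{0..hit_time \<rho> x \<omega>}|lborel. real (snd (snd (anc_proc \<rho> x \<omega> u)))))"
proof -
  obtain K where K: "jump_chain \<rho> x \<omega> K \<in> S_set" "\<forall>i<K. jump_chain \<rho> x \<omega> i \<notin> S_set"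
    using first_hit_S[OF h] by blast
  have "exp (- \<alpha> * (LINT u:{0..hit_time \<rho> x \<omega>}|lborel. real (snd (snd (anc_proc \<rho> x \<omega> u)))))
      = (\<Prod>j<K. killing_factor \<alpha> \<rho> (jump_chain \<rho> x \<omega> j) (fst (\<omega> !! j)))"
    using K(2) unfolding lint_c_until_hit_eq_sum[OF strict_mono_jump_time[OF g] K]
    by (simp add: killing_factor_jump_chain[OF g x] sum_distrib_left exp_sum)
  then have "eventually (\<lambda>k. killing_weight \<alpha> \<rho> k x \<omega> = exp (- \<alpha> * (LINT u:{0..hit_time \<rho> x \<omega>}|lborel. real (snd (snd (anc_proc \<rho> x \<omega> u)))))) sequentially"
    unfolding eventually_sequentially by (intro exI[of _ K] allI impI) (simp add: killing_weight_eq_prod[OF K])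
  then show ?thesis by (rule tendsto_eventually)
qed

lemma tendsto_integral_recomb_weight:
  assumes v: "0 \<le> v" "v \<le> 1" and rho: "0 \<le> \<rho>" and x: "x \<in> anc_box L M"
  shows "(\<lambda>k. \<integral>\<omega>. recomb_weight v \<rho> k x \<omega> \<partial>path_space)
           \<longlonglongrightarrow> (\<integral>\<omega>. v ^ recomb_count \<rho> x \<omega> (hit_time \<rho> x \<omega>) \<partial>path_space)"
proof (rule integral_dominated_convergence[where w="\<lambda>_. 1"])
  show "AE \<omega> in path_space. (\<lambda>k. recomb_weight v \<rho> k x \<omega>) \<longlonglongrightarrow> v ^ recomb_count \<rho> x \<omega> (hit_time \<rho> x \<omega>)"
    using AE_regular_noise AE_hits_S[OF rho x] by eventually_elim (rule recomb_weight_limit[OF _ rho])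
  show "AE \<omega> in path_space. norm (recomb_weight v \<rho> k x \<omega>) \<le> 1" for k
    using recomb_weight_le_1[OF v] recomb_weight_nonneg[OF v(1)] by (intro AE_I2) (simp add: abs_le_iff)
qed auto

lemma tendsto_integral_killing_weight:
  assumes a: "0 \<le> \<alpha>" and rho: "0 \<le> \<rho>" and x: "x \<in> anc_box L M"
  shows "(\<lambda>k. \<integral>\<omega>. killing_weight \<alpha> \<rho> k x \<omega> \<partial>path_space)
           \<longlonglongrightarrow> (\<integral>\<omega>. exp (- \<alpha> * (LINT u:{0..hit_time \<rho> x \<omega>}|lborel. real (snd (snd (anc_proc \<rho> x \<omega> u))))) \<partial>path_space)"
proof (rule integral_dominated_convergence[where w="\<lambda>_. 1"])
  show "AE \<omega> in path_space. (\<lambda>k. killing_weight \<alpha> \<rho> k x \<omega>)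
          \<longlonglongrightarrow> exp (- \<alpha> * (LINT u:{0..hit_time \<rho> x \<omega>}|lborel. real (snd (snd (anc_proc \<rho> x \<omega> u)))))"
    using AE_regular_noise AE_hits_S[OF rho x] by eventually_elim (rule killing_weight_limit[OF _ rho x])
  show "AE \<omega> in path_space. norm (killing_weight \<alpha> \<rho> k x \<omega>) \<le> 1" for k
    using killing_weight_le_1[OF a rho] killing_weight_nonneg by (intro AE_I2) (simp add: abs_le_iff)
qed auto

lemma integral_recomb_weight_eq_integral_killing_weight:
  assumes "0 \<le> v" "v \<le> 1" "0 \<le> \<rho>" "x \<in> anc_box L M"
  shows "(\<integral>\<omega>. recomb_weight v \<rho> k x \<omega> \<partial>path_space)
       = (\<integral>\<omega>. killing_weight (\<rho> * (1 - v) / 2) (v * \<rho>) k x \<omega> \<partial>path_space)"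
proof -
  have "(\<integral>\<omega>. recomb_weight v \<rho> k x \<omega> \<partial>path_space) = enn2real (E_recomb_weight v \<rho> k x)"
    unfolding E_recomb_weight_def by (rule integral_eq_nn_integral) (auto simp: recomb_weight_nonneg assms(1))
  also have "\<dots> = enn2real (E_killing_weight (\<rho> * (1 - v) / 2) (v * \<rho>) k x)"
    using E_recomb_weight_eq_E_killing_weight[OF assms] by simp
  also have "\<dots> = (\<integral>\<omega>. killing_weight (\<rho> * (1 - v) / 2) (v * \<rho>) k x \<omega> \<partial>path_space)"
    unfolding E_killing_weight_def by (rule integral_eq_nn_integral[symmetric]) (auto simp: killing_weight_nonneg)
  finally show ?thesis .
qed

theorem lemma5p2:
  fixes \<rho> v :: real and l m n :: nat
  assumes "\<rho> > 0" and "0 \<le> v" and "v \<le> 1" and "n + min l m \<ge> 1"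
  shows "(\<integral>\<omega>. v ^ recomb_count \<rho> (l, m, n) \<omega> (hit_time \<rho> (l, m, n) \<omega>) \<partial>path_space)
       = (\<integral>\<omega>. exp (- (\<rho> * (1 - v) / 2) *
                 (LINT u:{0..hit_time (v * \<rho>) (l, m, n) \<omega>}|lborel.
                    real (snd (snd (anc_proc (v * \<rho>) (l, m, n) \<omega> u))))) \<partial>path_space)"
proof -
  have x: "(l, m, n) \<in> anc_box (l + n) (m + n)" using assms(4) by (simp add: anc_box_def)
  have "0 \<le> \<rho>" "0 \<le> v * \<rho>" "0 \<le> \<rho> * (1 - v) / 2" using assms by simp_all
  note lim_recomb = tendsto_integral_recomb_weight[OF assms(2,3) \<open>0 \<le> \<rho>\<close> x]
  note lim_killing = tendsto_integral_killing_weight[OF \<open>0 \<le> \<rho> * (1 - v) / 2\<close> \<open>0 \<le> v * \<rho>\<close> x]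
  show ?thesis
    using LIMSEQ_unique[OF lim_recomb lim_killing[folded integral_recomb_weight_eq_integral_killing_weight[OF assms(2,3) \<open>0 \<le> \<rho>\<close> x]]]
    by simp
qed

end
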